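(* Assume the setting of the context, and run Algorithm 3 with $\tau = \frac12\sqrt{\mu/L}$, $\alpha=\mu/2$, $\eta = \frac{1}{2\sqrt{\mu L}}$, $\sigma = \frac1{18}\sqrt{\frac{\mu\lambda_{\min}^+(\mathbf{W})}{L\lambda_{\max}(\mathbf{W})}}$, $\nu = \frac{3}{80L}$, $\beta = \frac1{80L}$, $\theta = \frac{18\sqrt{\mu L\lambda_{\max}(\mathbf{W})}}{5\sqrt{\lambda_{\min}^+(\mathbf{W})}}$, $\gamma = \frac{\lambda_{\min}^+(\mathbf{W})}{80L}$, $\lambda = \frac{9\sqrt{\mu L}}{2\sqrt{\lambda_{\min}^+(\mathbf{W})\lambda_{\max}(\mathbf{W})}}$. Let $\rho := \frac1{18}\sqrt{\frac{\mu\lambda_{\min}^+(\mathbf{W})}{L\lambda_{\max}(\mathbf{W})}}$ and \[ \Psi^k := (1+\rho)\Big(\frac1\eta\|x^k-x^*\|^2 + \frac1\theta\|y^k-y^*\|^2 + \frac1\lambda\|z^k-z^*\|^2_{\mathbf{W}^\dagger}\Big) + \frac{2-\tau}{\tau}\mathrm{D}_r(x_f^k,x^* ) + \frac2\sigma\mathrm{D}_h\big((y_f^k,z_f^k),(y^*,z^* )\big). \] Then for all $k\ge0$, $\Psi^{k+1}\le \left(1-\frac{1}{1+\rho^{-1}}\right)\Psi^k$.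
   Context: Let $n\ge2$, $d\ge1$. $F:\mathbb{R}^{nd}\to\mathbb{R}$ is differentiable, $\mu$-strongly convex and $L$-smooth, $0<\mu\le L$. $\mathbf{W}$ is a symmetric positive semidefinite $nd\times nd$ matrix whose kernel is the consensus space $\{(x_1,\dots,x_n)\in(\mathbb{R}^d)^n:x_1=\dots=x_n\}$; $\lambda_{\max}(\mathbf{W})$, $\lambda_{\min}^+(\mathbf{W})$ are its largest and smallest positive eigenvalues. $\mathbf{W}^\dagger$ is the inverse of $\mathbf{W}$ restricted to $\mathrm{range}(\mathbf{W})$, $\|z\|^2_{\mathbf{W}^\dagger}:=\langle\mathbf{W}^\dagger z,z\rangle$ for $z\in\mathrm{range}(\mathbf{W})$. $x^*$ is the unique minimizer of $F$ over $\ker(\mathbf{W})$; $y^* := \nabla F(x^* )-\frac\mu2x^*$, $z^*:=-\nabla F(x^* )\in\mathrm{range}(\mathbf{W})$. $r(x):=F(x)-\frac\mu4\|x\|^2$, $h(y,z):=\frac1\mu\|y+z\|^2+\frac\nu2\|y\|^2$, so $\nabla r(x)=\nabla F(x)-\frac\mu2x$, $\nabla_yh(y,z)=\frac2\mu(y+z)+\nu y$, $\nabla_zh(y,z)=\frac2\mu(y+z)$. For a differentiable convex $g$, $\mathrm{D}_g(u,v):=g(u)-g(v)-\langle\nabla g(v),u-v\rangle$. Algorithm 3: given $x^0,y^0\in\mathbb{R}^{nd}$, $z^0\in\mathrm{range}(\mathbf{W})$, parameters $\eta,\theta,\lambda,\alpha,\beta,\gamma,\nu>0$, $\tau,\sigma\in(0,1)$,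 set $x_f^0=x^0$, $y_f^0=y^0$, $z_f^0=z^0$, and for $k\ge0$: $x_g^k=\tau x^k+(1-\tau)x_f^k$, $y_g^k=\sigma y^k+(1-\sigma)y_f^k$, $z_g^k=\sigma z^k+(1-\sigma)z_f^k$; $(x^{k+1},y^{k+1})$ satisfies $x^{k+1} = x^k + \eta\alpha(x_g^k-x^{k+1}) - \eta\nabla r(x_g^k) + \eta y^{k+1}$ and $y^{k+1} = y^k + \theta\beta(y_g^k - y^{k+1}) - \theta\nabla_y h(y_g^k,z_g^k) + \theta\nu y^{k+1} - \theta x^{k+1}$; $z^{k+1} = z^k + \lambda\gamma(z_g^k - z^{k+1}) - \lambda\mathbf{W}\nabla_z h(y_g^k,z_g^k)$; $x_f^{k+1}=x_g^k+\frac{2\tau}{2-\tau}(x^{k+1}-x^k)$, $y_f^{k+1}=y_g^k+\sigma(y^{k+1}-y^k)$, $z_f^{k+1}=z_g^k+\sigma(z^{k+1}-z^k)$. *)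

theory Defs
  imports "HOL-Analysis.Analysis"
begin

text \<open>Vectors of (R^d)^n are modelled as real^'d^'n; the nd x nd matrix W as a linear
operator on this space.\<close>

definition strongly_convex :: "real \<Rightarrow> ('a::real_inner \<Rightarrow> real) \<Rightarrow> bool" where
  "strongly_convex mu F \<longleftrightarrow>
     (\<forall>x y t. 0 \<le> t \<and> t \<le> 1 \<longrightarrow>
        F (t *\<^sub>R x + (1 - t) *\<^sub>R y) \<le> t * F x + (1 - t) * F y - mu / 2 * t * (1 - t) * (norm (x - y))\<^sup>2)"

definition lipschitz_gradient :: "real \<Rightarrow> ('a::real_inner \<Rightarrow> 'a) \<Rightarrow> bool" where
  "lipschitz_gradient L g \<longleftrightarrow> (\<forall>x y. norm (g x - g y) \<le> L * norm (x - y))"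

definition consensus :: "(real^'d^'n) set" where
  "consensus = {x. \<forall>i j. x $ i = x $ j}"

definition eigenvalues :: "(real^'d^'n \<Rightarrow> real^'d^'n) \<Rightarrow> real set" where
  "eigenvalues W = {l. \<exists>v. v \<noteq> 0 \<and> W v = l *\<^sub>R v}"

definition lambda_max :: "(real^'d^'n \<Rightarrow> real^'d^'n) \<Rightarrow> real" where
  "lambda_max W = Max (eigenvalues W)"

definition lambda_min_pos :: "(real^'d^'n \<Rightarrow> real^'d^'n) \<Rightarrow> real" where
  "lambda_min_pos W = Min {l \<in> eigenvalues W. 0 < l}"

definition Wdag :: "(real^'d^'n \<Rightarrow> real^'d^'n) \<Rightarrow> real^'d^'n \<Rightarrow> real^'d^'n" where
  "Wdag W z = (THE u. u \<in> range W \<and> W u = z)"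

definition Wdag_sqnorm :: "(real^'d^'n \<Rightarrow> real^'d^'n) \<Rightarrow> real^'d^'n \<Rightarrow> real" where
  "Wdag_sqnorm W z = Wdag W z \<bullet> z"

definition bregman :: "('a::real_inner \<Rightarrow> real) \<Rightarrow> ('a \<Rightarrow> 'a) \<Rightarrow> 'a \<Rightarrow> 'a \<Rightarrow> real" where
  "bregman g dg u v = g u - g v - dg v \<bullet> (u - v)"

end

theory Submission
  imports Defs
begin

text \<open>The proof is a Lyapunov argument in the style of accelerated primal-dual methods. One
  iteration is analysed block by block: the \<open>x\<close>-step is a gradient step on
  \<open>r = F - \<mu>/4 \<parallel>\<cdot>\<parallel>\<^sup>2\<close> (which is \<open>\<mu>/2\<close>-strongly convex and \<open>L\<close>-smooth) with Nesterov
  extrapolation, and the \<open>y\<close>- and \<open>z\<close>-steps are forward-backward steps on the quadratic \<open>h\<close>,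
  the \<open>z\<close>-step measured in the \<open>W\<^sup>\<dagger>\<close>-norm. Expanding each step with the polarization identity
  gives an energy identity per block; added up, the coupling terms \<open>\<langle>y\<^sup>+ - y\<^sup>*, x\<^sup>+ - x\<^sup>*\<rangle>\<close>
  cancel and the \<open>h\<close>-terms telescope into \<open>D\<^sub>h\<close> at the new averaged point. The spectral bounds
  \<open>\<lambda>\<^sup>+\<^sub>m\<^sub>i\<^sub>n(W) \<parallel>z\<parallel>\<^sup>2\<^sub>W\<^sub>\<dagger> \<le> \<parallel>z\<parallel>\<^sup>2 \<le> \<lambda>\<^sub>m\<^sub>a\<^sub>x(W) \<parallel>z\<parallel>\<^sup>2\<^sub>W\<^sub>\<dagger>\<close> on \<open>range W\<close>, together with the
  choice of parameters, leave enough slack to pay for the factor \<open>1 + \<rho>\<close>.\<close>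

section \<open>Smooth strongly convex functions\<close>

lemma has_real_derivative_along_line:
  fixes F :: "'a::real_inner \<Rightarrow> real"
  assumes "\<And>u. (F has_derivative (\<lambda>h. g u \<bullet> h)) (at u)"
  shows "((\<lambda>t. F (v + t *\<^sub>R d)) has_real_derivative g (v + t *\<^sub>R d) \<bullet> d) (at t)"
proof -
  have "((\<lambda>t. v + t *\<^sub>R d) has_derivative (\<lambda>h. h *\<^sub>R d)) (at t)"
    by (auto intro!: derivative_eq_intros)
  from has_derivative_compose[OF this assms]
  show ?thesis
    by (simp add: has_real_derivative_iff_has_vector_derivative has_vector_derivative_def mult.commute)
qed

lemma lipschitz_gradient_upper_bound:
  fixes F :: "'a::real_inner \<Rightarrow> real"
  assumes der: "\<And>u. (F has_derivative (\<lambda>h. g u \<bullet> h)) (at u)"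
    and lip: "lipschitz_gradient L g"
  shows "F u \<le> F v + g v \<bullet> (u - v) + L/2 * (norm (u - v))\<^sup>2"
proof -
  define d where "d = u - v"
  define phi where "phi t = F (v + t *\<^sub>R d) - t * (g v \<bullet> d) - L/2 * t^2 * (norm d)^2" for t
  have phi': "DERIV phi t :> (g (v + t *\<^sub>R d) - g v) \<bullet> d - L * t * (norm d)^2" for t
    using has_real_derivative_along_line[OF der, of v d t] unfolding phi_def
    by (auto intro!: derivative_eq_intros simp: power2_eq_square inner_diff_left)
  have "phi 1 \<le> phi 0"
  proof (rule DERIV_nonpos_imp_nonincreasing[of 0 1 phi])
    fix t :: real assume t: "0 \<le> t" "t \<le> 1"
    have "(g (v + t *\<^sub>R d) - g v) \<bullet> d \<le> norm (g (v + t *\<^sub>R d) - g v) * norm d"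
      by (rule norm_cauchy_schwarz)
    also have "\<dots> \<le> (L * norm (t *\<^sub>R d)) * norm d"
      using lip unfolding lipschitz_gradient_def
      by (intro mult_right_mono) (metis add_diff_cancel_left', simp)
    also have "\<dots> = L * t * (norm d)^2" using t by (simp add: power2_eq_square)
    finally show "\<exists>y. DERIV phi t :> y \<and> y \<le> 0" using phi' by force
  qed simp
  then show ?thesis unfolding phi_def d_def by simp
qed

lemma strongly_convex_lower_bound:
  fixes F :: "'a::real_inner \<Rightarrow> real"
  assumes der: "\<And>u. (F has_derivative (\<lambda>h. g u \<bullet> h)) (at u)"
    and sc: "strongly_convex mu F"
  shows "F v + g v \<bullet> (u - v) + mu/2 * (norm (u - v))\<^sup>2 \<le> F u"
proof -
  define d where "d = u - v"
  have "((\<lambda>t. F (v + t *\<^sub>R d)) has_real_derivative g v \<bullet> d) (at 0)"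
    using has_real_derivative_along_line[OF der, of v d 0] by simp
  hence "((\<lambda>t. (F (v + t *\<^sub>R d) - F v) / t) \<longlongrightarrow> g v \<bullet> d) (at_right 0)"
    by (auto simp: has_field_derivative_iff intro: tendsto_mono[OF at_le])
  moreover have "((\<lambda>t. F u - F v - mu/2 * (1 - t) * (norm d)^2)
      \<longlongrightarrow> F u - F v - mu/2 * (1 - 0) * (norm d)^2) (at_right 0)"
    by (intro tendsto_intros)
  moreover have "eventually (\<lambda>t. (F (v + t *\<^sub>R d) - F v) / t
      \<le> F u - F v - mu/2 * (1 - t) * (norm d)^2) (at_right (0::real))"
    unfolding eventually_at_right_field
  proof (intro exI[of _ 1] conjI allI impI)
    fix t :: real assume t: "0 < t" "t < 1"
    have "v + t *\<^sub>R d = t *\<^sub>R u + (1 - t) *\<^sub>R v" unfolding d_def by (simp add: algebra_simps)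
    hence "F (v + t *\<^sub>R d) \<le> t * F u + (1 - t) * F v - mu / 2 * t * (1 - t) * (norm d)\<^sup>2"
      using sc t unfolding strongly_convex_def d_def by auto
    hence "F (v + t *\<^sub>R d) - F v \<le> t * (F u - F v - mu/2 * (1 - t) * (norm d)^2)"
      by (simp add: algebra_simps)
    then show "(F (v + t *\<^sub>R d) - F v) / t \<le> F u - F v - mu/2 * (1 - t) * (norm d)^2"
      using t by (simp add: divide_le_eq mult.commute)
  qed simp
  ultimately have "g v \<bullet> d \<le> F u - F v - mu/2 * (1 - 0) * (norm d)^2"
    by (intro tendsto_le[of "at_right 0"]) simp_all
  then show ?thesis unfolding d_def by simp
qed

lemma gradient_orthogonal_at_line_minimum:
  fixes F :: "'a::real_inner \<Rightarrow> real"
  assumes der: "\<And>u. (F has_derivative (\<lambda>h. g u \<bullet> h)) (at u)"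
    and min: "\<And>t::real. F x \<le> F (x + t *\<^sub>R c)"
  shows "g x \<bullet> c = 0"
  using has_real_derivative_along_line[OF der, of x c 0]
  by (intro DERIV_local_min[where d=1]) (use min in auto)

lemma bregman_shifted_bounds:
  fixes F :: "'a::real_inner \<Rightarrow> real"
  assumes der: "\<And>u. (F has_derivative (\<lambda>h. g u \<bullet> h)) (at u)"
    and sc: "strongly_convex mu F" and lip: "lipschitz_gradient L g" and mu: "0 < mu" "mu \<le> L"
  defines "r \<equiv> \<lambda>u. F u - mu / 4 * (norm u)\<^sup>2"
  defines "dr \<equiv> \<lambda>u. g u - (mu / 2) *\<^sub>R u"
  shows "mu/4 * (norm (u - v))^2 \<le> bregman r dr u v"
    and "bregman r dr u v \<le> L/2 * (norm (u - v))^2"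
    and "1/(2*L) * (norm (dr u - dr v))^2 \<le> bregman r dr u v"
proof -
  have eq: "bregman r dr u v = (F u - F v - g v \<bullet> (u - v)) - mu/4 * (norm (u - v))^2" for u v
    unfolding bregman_def r_def dr_def power2_norm_eq_inner
    by (simp add: inner_simps inner_commute algebra_simps)
  have lower: "mu/4 * (norm (u - v))^2 \<le> bregman r dr u v" for u v
    using strongly_convex_lower_bound[OF der sc, of v u] unfolding eq by simp
  have upper: "bregman r dr u v \<le> L/2 * (norm (u - v))^2" for u v
  proof -
    have "0 \<le> mu/4 * (norm (u - v))^2" using mu by simp
    then show ?thesis using lipschitz_gradient_upper_bound[OF der lip, of u v] unfolding eq by simp
  qed
  show "mu/4 * (norm (u - v))^2 \<le> bregman r dr u v" by (rule lower)
  show "bregman r dr u v \<le> L/2 * (norm (u - v))^2" by (rule upper)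
  text \<open>Co-coercivity: compare at the gradient step \<open>w = u - (1/L) (dr u - dr v)\<close>.\<close>
  define G where "G = dr u - dr v"
  define w where "w = u - (1/L) *\<^sub>R G"
  have L: "0 < L" using mu by simp
  have "0 \<le> mu/4 * (norm (w - v))^2" using mu by simp
  hence "0 \<le> bregman r dr w v" using lower[of w v] by linarith
  moreover have "bregman r dr w u \<le> 1/(2*L) * (norm G)^2"
    using upper[of w u] L unfolding w_def by (simp add: power_mult_distrib power2_eq_square field_simps)
  moreover have "dr u \<bullet> (w - u) - dr v \<bullet> (w - v) = - (dr v \<bullet> (u - v)) - (1/L) * (G \<bullet> G)"
    unfolding w_def G_def by (simp add: inner_simps algebra_simps)
  moreover have "1/(2*L) * (norm G)^2 = (1/L) * (G \<bullet> G) - 1/(2*L) * (norm G)^2"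
    using L by (simp add: power2_norm_eq_inner field_simps)
  ultimately show "1/(2*L) * (norm (dr u - dr v))^2 \<le> bregman r dr u v"
    unfolding bregman_def G_def[symmetric] by linarith
qed

section \<open>Symmetric positive semidefinite operators\<close>

lemma discriminant_le_of_nonneg_quadratic:
  fixes a b c :: real
  assumes q: "\<And>t. 0 \<le> a + 2*b*t + c*t^2" and c: "0 \<le> c"
  shows "b^2 \<le> a*c"
proof (cases "c = 0")
  case True
  show ?thesis
  proof (cases "b = 0")
    case False
    have "0 \<le> a + 2*b*(-(a+1)/(2*b)) + c*(-(a+1)/(2*b))^2" by (rule q)
    with True False show ?thesis by (simp add: field_simps)
  qed (use True q[of 0] in simp)
next
  case False
  hence cp: "c > 0" using c by simp
  have "0 \<le> a + 2*b*(-b/c) + c*(-b/c)^2" by (rule q)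
  also have "\<dots> = (a*c - b^2)/c" using cp by (simp add: field_simps power2_eq_square)
  finally show ?thesis using cp by (simp add: zero_le_divide_iff)
qed

lemma psd_cauchy_schwarz:
  fixes A :: "'a::real_inner \<Rightarrow> 'a"
  assumes lin: "linear A" and sym: "\<And>u v. A u \<bullet> v = u \<bullet> A v"
    and S: "subspace S" and psd: "\<And>v. v \<in> S \<Longrightarrow> 0 \<le> A v \<bullet> v"
    and u: "u \<in> S" and w: "w \<in> S"
  shows "(A u \<bullet> w)^2 \<le> (A u \<bullet> u) * (A w \<bullet> w)"
proof -
  have Awu: "A w \<bullet> u = A u \<bullet> w" using sym[of w u] by (simp add: inner_commute)
  have "(A w \<bullet> u)^2 \<le> (A u \<bullet> u) * (A w \<bullet> w)"
  proof (rule discriminant_le_of_nonneg_quadratic)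
    fix t :: real
    have "u + t *\<^sub>R w \<in> S" using S u w by (simp add: subspace_add subspace_scale)
    hence "0 \<le> A (u + t *\<^sub>R w) \<bullet> (u + t *\<^sub>R w)" by (rule psd)
    also have "\<dots> = A u \<bullet> u + 2 * (A w \<bullet> u) * t + (A w \<bullet> w) * t^2"
      using Awu by (simp add: linear_add[OF lin] linear_scale[OF lin] inner_add_left inner_add_right
          algebra_simps power2_eq_square)
    finally show "0 \<le> A u \<bullet> u + 2 * (A w \<bullet> u) * t + (A w \<bullet> w) * t^2" .
  qed (use psd w in auto)
  then show ?thesis using Awu by simp
qed

lemma finite_eigenvalues:
  fixes W :: "real^'d^'n \<Rightarrow> real^'d^'n"
  assumes sym: "\<And>u v. W u \<bullet> v = u \<bullet> W v"
  shows "finite (eigenvalues W)"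
proof -
  define f where "f l = (SOME v. v \<noteq> 0 \<and> W v = l *\<^sub>R v)" for l
  have f: "f l \<noteq> 0 \<and> W (f l) = l *\<^sub>R f l" if l: "l \<in> eigenvalues W" for l
  proof -
    obtain v where "v \<noteq> 0 \<and> W v = l *\<^sub>R v" using l unfolding eigenvalues_def by auto
    then show ?thesis unfolding f_def by (rule someI)
  qed
  have inj: "inj_on f (eigenvalues W)"
  proof (rule inj_onI)
    fix l l' assume l: "l \<in> eigenvalues W" and l': "l' \<in> eigenvalues W" and e: "f l = f l'"
    have "l *\<^sub>R f l = l' *\<^sub>R f l" using f[OF l] f[OF l'] e by metis
    thus "l = l'" using f[OF l] by (simp add: scaleR_cancel_right)
  qed
  have "pairwise orthogonal (f ` eigenvalues W)"
    unfolding pairwise_def orthogonal_def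
  proof (intro ballI impI)
    fix a b assume "a \<in> f ` eigenvalues W" "b \<in> f ` eigenvalues W" "a \<noteq> b"
    then obtain l l' where l: "l \<in> eigenvalues W" and l': "l' \<in> eigenvalues W"
      and ab: "a = f l" "b = f l'" "l \<noteq> l'"
      by blast
    have "l * (f l \<bullet> f l') = W (f l) \<bullet> f l'" using f[OF l] by simp
    also have "\<dots> = f l \<bullet> W (f l')" by (rule sym)
    also have "\<dots> = l' * (f l \<bullet> f l')" using f[OF l'] by simp
    finally have "(l - l') * (f l \<bullet> f l') = 0" by (simp add: algebra_simps)
    with ab show "a \<bullet> b = 0" by simp
  qed
  moreover have "0 \<notin> f ` eigenvalues W" using f by force
  ultimately have "independent (f ` eigenvalues W)" by (rule pairwise_orthogonal_independent)
  hence "finite (f ` eigenvalues W)" by (rule independent_bound[THEN conjunct1])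
  thus ?thesis using inj by (rule finite_imageD)
qed

lemma selfadjoint_range_inter_kernel:
  fixes W :: "'a::real_inner \<Rightarrow> 'a"
  assumes sym: "\<And>u v. W u \<bullet> v = u \<bullet> W v" and "v \<in> range W" and "W v = 0"
  shows "v = 0"
proof -
  obtain u where u: "v = W u" using \<open>v \<in> range W\<close> by auto
  have "v \<bullet> v = u \<bullet> W v" using sym[of u v] u by simp
  then show ?thesis using \<open>W v = 0\<close> by simp
qed

text \<open>Both extremal eigenvalues are found as extrema of the Rayleigh quotient on a unit
  sphere; at an extremal point \<open>u\<^sub>0\<close> the shifted operator \<open>A\<close> is semidefinite with
  \<open>A u\<^sub>0 \<bullet> u\<^sub>0 = 0\<close>, so \<open>A u\<^sub>0 = 0\<close> by Cauchy-Schwarz for the form of \<open>A\<close>.\<close>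

lemma rayleigh_le_max_eigenvalue:
  fixes W :: "real^'d^'n \<Rightarrow> real^'d^'n"
  assumes lin: "linear W" and sym: "\<And>u v. W u \<bullet> v = u \<bullet> W v"
  shows "\<exists>M \<in> eigenvalues W. \<forall>v. W v \<bullet> v \<le> M * (norm v)^2"
proof -
  have cont: "continuous_on (sphere 0 1) (\<lambda>u. W u \<bullet> u)"
    using lin by (intro continuous_intros linear_continuous_on) (simp add: linear_conv_bounded_linear)
  obtain u0 where u0: "u0 \<in> sphere 0 1" and mx: "\<And>y. y \<in> sphere 0 1 \<Longrightarrow> W y \<bullet> y \<le> W u0 \<bullet> u0"
    using continuous_attains_sup[OF compact_sphere _ cont] by auto
  define M where "M = W u0 \<bullet> u0"
  have bound: "W v \<bullet> v \<le> M * (norm v)^2" for v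
  proof (cases "v = 0")
    case False
    have "W ((1 / norm v) *\<^sub>R v) \<bullet> ((1 / norm v) *\<^sub>R v) \<le> M"
      using mx[of "(1 / norm v) *\<^sub>R v"] False by (simp add: M_def)
    then show ?thesis using lin False by (simp add: linear_scale power2_eq_square divide_le_eq mult.commute)
  qed (use lin in \<open>simp add: linear_0\<close>)
  define A where "A v = M *\<^sub>R v - W v" for v
  have linA: "linear A" using lin unfolding A_def linear_iff by (simp add: algebra_simps)
  have symA: "A u \<bullet> v = u \<bullet> A v" for u v
    unfolding A_def using sym[of u v] by (simp add: inner_diff_left inner_diff_right)
  have psdA: "0 \<le> A v \<bullet> v" for v
    using bound[of v] unfolding A_def by (simp add: inner_diff_left power2_norm_eq_inner)
  have "A u0 \<bullet> u0 = 0"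
    unfolding A_def M_def using u0 by (simp add: inner_diff_left power2_norm_eq_inner[symmetric])
  with psd_cauchy_schwarz[OF linA symA subspace_UNIV psdA, of u0 "A u0"]
  have "W u0 = M *\<^sub>R u0" unfolding A_def by simp
  moreover have "u0 \<noteq> 0" using u0 by auto
  ultimately have "M \<in> eigenvalues W" unfolding eigenvalues_def by auto
  with bound show ?thesis by blast
qed

lemma rayleigh_ge_min_pos_eigenvalue:
  fixes W :: "real^'d^'n \<Rightarrow> real^'d^'n"
  assumes lin: "linear W" and sym: "\<And>u v. W u \<bullet> v = u \<bullet> W v" and psd: "\<And>u. 0 \<le> W u \<bullet> u"
    and nz: "W w \<noteq> 0"
  shows "\<exists>m \<in> eigenvalues W. 0 < m \<and> (\<forall>v \<in> range W. m * (norm v)^2 \<le> W v \<bullet> v)"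
proof -
  have sub: "subspace (range W)" using lin by (simp add: linear_subspace_image)
  define S where "S = sphere 0 1 \<inter> range W"
  have cont: "continuous_on S (\<lambda>u. W u \<bullet> u)"
    using lin by (intro continuous_intros linear_continuous_on) (simp add: linear_conv_bounded_linear)
  have "(1 / norm (W w)) *\<^sub>R W w \<in> S"
    using nz sub unfolding S_def by (simp add: subspace_scale)
  hence ne: "S \<noteq> {}" by blast
  have "compact S" unfolding S_def by (intro compact_Int_closed compact_sphere closed_subspace sub)
  then obtain u0 where u0: "u0 \<in> S" and mn: "\<And>y. y \<in> S \<Longrightarrow> W u0 \<bullet> u0 \<le> W y \<bullet> y"
    using continuous_attains_inf[OF _ ne cont] by blast
  define m where "m = W u0 \<bullet> u0"
  have n0: "norm u0 = 1" and u0r: "u0 \<in> range W" using u0 by (auto simp: S_def)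
  have bound: "m * (norm v)^2 \<le> W v \<bullet> v" if vr: "v \<in> range W" for v
  proof (cases "v = 0")
    case False
    have "m \<le> W ((1 / norm v) *\<^sub>R v) \<bullet> ((1 / norm v) *\<^sub>R v)"
      using mn[of "(1 / norm v) *\<^sub>R v"] False vr sub by (simp add: S_def m_def subspace_scale)
    then show ?thesis using lin False by (simp add: linear_scale power2_eq_square le_divide_eq mult.commute)
  qed (use lin in \<open>simp add: linear_0\<close>)
  define A where "A v = W v - m *\<^sub>R v" for v
  have linA: "linear A" using lin unfolding A_def linear_iff by (simp add: algebra_simps)
  have symA: "A u \<bullet> v = u \<bullet> A v" for u v
    unfolding A_def using sym[of u v] by (simp add: inner_diff_left inner_diff_right)
  have psdA: "0 \<le> A v \<bullet> v" if "v \<in> range W" for v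
    using bound[OF that] unfolding A_def by (simp add: inner_diff_left power2_norm_eq_inner)
  have "A u0 \<in> range W" unfolding A_def using sub u0r by (intro subspace_diff subspace_scale) auto
  moreover have "A u0 \<bullet> u0 = 0"
    unfolding A_def m_def using n0 by (simp add: inner_diff_left power2_norm_eq_inner[symmetric])
  ultimately have eq: "W u0 = m *\<^sub>R u0"
    using psd_cauchy_schwarz[OF linA symA sub psdA u0r, of "A u0"] unfolding A_def by simp
  moreover have "u0 \<noteq> 0" using n0 by auto
  ultimately have "m \<in> eigenvalues W" unfolding eigenvalues_def by auto
  moreover have "m \<noteq> 0"
    using eq selfadjoint_range_inter_kernel[OF sym u0r] n0 by force
  moreover have "0 \<le> m" unfolding m_def by (rule psd)
  ultimately show ?thesis using bound by (intro bexI[of _ m]) auto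
qed

lemma spectral_bounds:
  fixes W :: "real^'d^'n \<Rightarrow> real^'d^'n"
  assumes lin: "linear W" and sym: "\<And>u v. W u \<bullet> v = u \<bullet> W v" and psd: "\<And>u. 0 \<le> W u \<bullet> u"
    and nz: "W w \<noteq> 0"
  shows "\<And>v. W v \<bullet> v \<le> lambda_max W * (norm v)^2"
    and "\<And>v. v \<in> range W \<Longrightarrow> lambda_min_pos W * (norm v)^2 \<le> W v \<bullet> v"
    and "0 < lambda_min_pos W" and "lambda_min_pos W \<le> lambda_max W"
proof -
  have fin: "finite (eigenvalues W)" by (rule finite_eigenvalues[OF sym])
  obtain M where M: "M \<in> eigenvalues W" "\<And>v. W v \<bullet> v \<le> M * (norm v)^2"
    using rayleigh_le_max_eigenvalue[OF lin sym] by blast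
  obtain m where m: "m \<in> eigenvalues W" "0 < m" "\<And>v. v \<in> range W \<Longrightarrow> m * (norm v)^2 \<le> W v \<bullet> v"
    using rayleigh_ge_min_pos_eigenvalue[OF lin sym psd nz] by blast
  have finp: "finite {l \<in> eigenvalues W. 0 < l}" using fin by simp
  have "M \<le> lambda_max W" unfolding lambda_max_def using fin M(1) by simp
  then show "W v \<bullet> v \<le> lambda_max W * (norm v)^2" for v
    using M(2)[of v] by (meson order_trans mult_right_mono zero_le_power2)
  have "lambda_min_pos W \<le> m" unfolding lambda_min_pos_def using finp m by (intro Min_le) auto
  then show "lambda_min_pos W * (norm v)^2 \<le> W v \<bullet> v" if "v \<in> range W" for v
    using m(3)[OF that] by (meson order_trans mult_right_mono zero_le_power2)
  have "lambda_min_pos W \<in> {l \<in> eigenvalues W. 0 < l}" unfolding lambda_min_pos_def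
    using finp m by (intro Min_in) auto
  then show "0 < lambda_min_pos W" and "lambda_min_pos W \<le> lambda_max W"
    unfolding lambda_max_def using fin by auto
qed

lemma norm_image_sq_le_lambda_max:
  fixes W :: "real^'d^'n \<Rightarrow> real^'d^'n"
  assumes lin: "linear W" and sym: "\<And>u v. W u \<bullet> v = u \<bullet> W v" and psd: "\<And>u. 0 \<le> W u \<bullet> u"
    and nz: "W w \<noteq> 0"
  shows "(norm (W u))^2 \<le> lambda_max W * (W u \<bullet> u)"
proof -
  note sp = spectral_bounds[OF lin sym psd nz]
  define N where "N = W u \<bullet> W u"
  have "N * N \<le> (W u \<bullet> u) * (W (W u) \<bullet> W u)"
    using psd_cauchy_schwarz[OF lin sym subspace_UNIV psd] unfolding N_def
    by (simp add: power2_eq_square)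
  also have "\<dots> \<le> (W u \<bullet> u) * (lambda_max W * N)"
    using sp(1)[of "W u"] psd unfolding N_def by (intro mult_left_mono) (auto simp: power2_norm_eq_inner)
  finally have "N * N \<le> (lambda_max W * (W u \<bullet> u)) * N" by (simp add: algebra_simps)
  moreover have "0 \<le> lambda_max W * (W u \<bullet> u)" using sp(3,4) psd[of u] by simp
  ultimately have "N \<le> lambda_max W * (W u \<bullet> u)"
    unfolding N_def by (cases "W u = 0") (auto simp: mult_le_cancel_right)
  then show ?thesis unfolding N_def by (simp add: power2_norm_eq_inner)
qed

lemma lambda_min_pos_le_norm_image_sq:
  fixes W :: "real^'d^'n \<Rightarrow> real^'d^'n"
  assumes lin: "linear W" and sym: "\<And>u v. W u \<bullet> v = u \<bullet> W v" and psd: "\<And>u. 0 \<le> W u \<bullet> u"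
    and nz: "W w \<noteq> 0" and u: "u \<in> range W"
  shows "lambda_min_pos W * (W u \<bullet> u) \<le> (norm (W u))^2"
proof -
  note sp = spectral_bounds[OF lin sym psd nz]
  define P where "P = W u \<bullet> u"
  define l where "l = lambda_min_pos W"
  have l0: "0 < l" unfolding l_def by (rule sp(3))
  have h1: "l * (norm u)^2 \<le> P" unfolding l_def P_def by (rule sp(2)[OF u])
  have cs: "P^2 \<le> (norm (W u))^2 * (norm u)^2"
    using Cauchy_Schwarz_ineq2[of "W u" u] unfolding P_def
    by (metis abs_ge_zero power_mono power_mult_distrib power2_abs)
  show ?thesis
  proof (cases "P = 0")
    case False
    hence Pp: "0 < P" using psd[of u] unfolding P_def by simp
    have "(l * P) * P \<le> l * ((norm (W u))^2 * (norm u)^2)"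
      using cs l0 by (simp add: power2_eq_square mult.assoc)
    also have "\<dots> = (norm (W u))^2 * (l * (norm u)^2)" by (simp add: algebra_simps)
    also have "\<dots> \<le> (norm (W u))^2 * P" using h1 by (intro mult_left_mono) auto
    finally show ?thesis using Pp unfolding P_def[symmetric] l_def[symmetric] by (simp add: mult_le_cancel_right)
  qed (simp add: P_def)
qed

lemma kernel_eq_orthogonal_range:
  fixes W :: "real^'d^'n \<Rightarrow> real^'d^'n"
  assumes lin: "linear W" and sym: "\<And>u v. W u \<bullet> v = u \<bullet> W v"
  shows "{u. W u = 0} = (range W)\<^sup>\<bottom>"
proof -
  have "adjoint W = W" by (rule adjoint_unique) (use sym in auto)
  then show ?thesis using ker_orthogonal_comp_adjoint[OF lin] by (simp add: vimage_def)
qed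

lemma Wdag_inverse:
  fixes W :: "real^'d^'n \<Rightarrow> real^'d^'n"
  assumes lin: "linear W" and sym: "\<And>u v. W u \<bullet> v = u \<bullet> W v" and v: "v \<in> range W"
  shows "Wdag W v \<in> range W" and "W (Wdag W v) = v"
proof -
  have sub: "subspace (range W)" using lin by (simp add: linear_subspace_image)
  obtain u0 where u0: "v = W u0" using v by auto
  have "u0 \<in> range W + (range W)\<^sup>\<bottom>" using subspace_sum_orthogonal_comp[OF sub] by simp
  then obtain r k where rk: "r \<in> range W" "k \<in> (range W)\<^sup>\<bottom>" "u0 = r + k" by (meson set_plus_elim)
  have "W k = 0" using rk(2) kernel_eq_orthogonal_range[OF lin sym] by blast
  hence ex: "r \<in> range W \<and> W r = v" using rk u0 lin by (simp add: linear_add)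
  have uniq: "x = r" if "x \<in> range W \<and> W x = v" for x
  proof -
    have "x - r \<in> range W" using that rk(1) sub by (simp add: subspace_diff)
    moreover have "W (x - r) = 0" using that ex lin by (simp add: linear_diff)
    ultimately have "x - r = 0" by (rule selfadjoint_range_inter_kernel[OF sym])
    then show ?thesis by simp
  qed
  have "Wdag W v = r" unfolding Wdag_def using ex uniq by (rule the_equality)
  with ex show "Wdag W v \<in> range W" and "W (Wdag W v) = v" by auto
qed

lemma orthogonal_kernel_in_range:
  fixes W :: "real^'d^'n \<Rightarrow> real^'d^'n"
  assumes lin: "linear W" and sym: "\<And>u v. W u \<bullet> v = u \<bullet> W v"
    and g: "\<And>c. W c = 0 \<Longrightarrow> c \<bullet> g = 0"
  shows "g \<in> range W"
proof -
  have "g \<in> {u. W u = 0}\<^sup>\<bottom>" using g unfolding orthogonal_comp_def orthogonal_def by auto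
  hence "g \<in> (range W)\<^sup>\<bottom>\<^sup>\<bottom>" unfolding kernel_eq_orthogonal_range[OF lin sym] .
  moreover have "subspace (range W)" using lin by (simp add: linear_subspace_image)
  ultimately show ?thesis by (simp add: orthogonal_comp_self)
qed

section \<open>Energy identities for one iteration\<close>

lemma double_inner_diff_self:
  fixes a b :: "'a::real_inner"
  shows "2 * ((a - b) \<bullet> a) = (norm a)^2 - (norm b)^2 + (norm (a - b))^2"
  unfolding power2_norm_eq_inner by (simp add: inner_simps inner_commute)

lemma double_inner_diff_other:
  fixes a g :: "'a::real_inner"
  shows "2 * ((g - a) \<bullet> a) = (norm g)^2 - (norm a)^2 - (norm (g - a))^2"
  unfolding power2_norm_eq_inner by (simp add: inner_simps inner_commute)

lemma selfadjoint_double_inner_diff_self: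
  fixes W :: "'a::real_inner \<Rightarrow> 'a"
  assumes lin: "linear W" and sym: "\<And>u v. W u \<bullet> v = u \<bullet> W v"
  shows "2 * (W (u - v) \<bullet> u) = W u \<bullet> u - W v \<bullet> v + W (u - v) \<bullet> (u - v)"
proof -
  have "W v \<bullet> u = W u \<bullet> v" using sym[of v u] by (simp add: inner_commute)
  then show ?thesis using lin by (simp add: linear_diff inner_diff_left inner_diff_right)
qed

lemma norm_add_sq_le:
  fixes d e :: "'a::real_normed_vector"
  shows "(norm (d + e))^2 \<le> 2 * (norm d)^2 + 2 * (norm e)^2"
proof -
  have "(norm (d + e))^2 \<le> (norm d + norm e)^2" by (simp add: norm_triangle_ineq power_mono)
  also have "\<dots> \<le> 2 * (norm d)^2 + 2 * (norm e)^2"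
    using sum_squares_ge_zero[of "norm d - norm e" 0] by (simp add: power2_eq_square algebra_simps)
  finally show ?thesis .
qed

lemma norm_add3_sq_le:
  fixes u v w :: "'a::real_normed_vector"
  shows "(norm (u + v + w))^2 \<le> 3 * ((norm u)^2 + (norm v)^2 + (norm w)^2)"
proof -
  have "norm (u + v + w) \<le> norm u + norm v + norm w"
    by (metis add_mono_thms_linordered_semiring(3) norm_triangle_ineq order_trans)
  hence "(norm (u + v + w))^2 \<le> (norm u + norm v + norm w)^2" by (simp add: power_mono)
  also have "\<dots> \<le> 3 * ((norm u)^2 + (norm v)^2 + (norm w)^2)"
    using sum_squares_ge_zero[of "norm u - norm v" "norm v - norm w"] sum_squares_ge_zero[of "norm u - norm w" 0]
    by (simp add: power2_eq_square algebra_simps)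
  finally show ?thesis .
qed

lemma extrapolation_inner_identity:
  fixes w wf w1 :: "'a::real_inner"
  assumes s: "0 < s"
  defines "wg \<equiv> s *\<^sub>R w + (1 - s) *\<^sub>R wf"
  defines "wf1 \<equiv> wg + s *\<^sub>R (w1 - w)"
  shows "- 2 * (wg \<bullet> w1) = - (1/s) * (norm wf1)^2 + ((1-s)/s) * (norm wf)^2 + (1/s) * (norm (wf1 - wg))^2
          - (norm wg)^2 - ((1-s)/s) * (norm (wf - wg))^2"
  using s unfolding wg_def wf1_def power2_norm_eq_inner
  by (simp add: inner_simps inner_commute field_simps)

text \<open>The scalar identity behind \<open>bregman_extrapolation_identity\<close> below, for
  \<open>k = (2 - \<tau>)/\<tau>\<close>, \<open>m = 2(1 - \<tau>)/\<tau>\<close> and \<open>c = 2\<tau>/(2 - \<tau>)\<close>.\<close>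

lemma extrapolation_coefficient_identity:
  fixes A B C D E G r1 rs rf rg tau k m c :: real
  assumes "k * c = 2" "k - m - 1 = 0" "tau * (k + 1) = 2" "(1 - tau) * (k + 1) - m = 0"
    and "tau * (2 + m) = 2" "m * tau - 2 * (1 - tau) = 0"
  shows "-2 * (D + E - A - B) = - (k * (r1 - rs - (tau*B + (1-tau)*C + c*A))) + m * (rf - rs - C)
     - (rg - rs - (tau*B + (1-tau)*C)) + k * (r1 - rg - c*D)
     - 2 * (rs - rg - (- tau*E - (1-tau)*G)) - m * (rf - rg - (tau*G - tau*E))"
proof -
  have "- (k * (r1 - rs - (tau*B + (1-tau)*C + c*A))) + m * (rf - rs - C)
     - (rg - rs - (tau*B + (1-tau)*C)) + k * (r1 - rg - c*D)
     - 2 * (rs - rg - (- tau*E - (1-tau)*G)) - m * (rf - rg - (tau*G - tau*E))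
     = (k*c)*A - (k*c)*D + (k-m-1)*rs - (k-m-1)*rg + (tau*(k+1))*B + ((1-tau)*(k+1) - m)*C
       - (tau*(2+m))*E + (m*tau - 2*(1-tau))*G"
    by (simp add: algebra_simps)
  then show ?thesis using assms by simp
qed

text \<open>The analogue of \<open>extrapolation_inner_identity\<close> for the primal extrapolation with step
  \<open>2\<tau>/(2 - \<tau>)\<close>; all values of \<open>r\<close> cancel because \<open>(2 - \<tau>)/\<tau> - 2(1 - \<tau>)/\<tau> = 1\<close>.\<close>

lemma bregman_extrapolation_identity:
  fixes r :: "'a::real_inner \<Rightarrow> real" and x xf x1 xs :: 'a
  assumes t: "0 < tau" "tau < 1"
  defines "xg \<equiv> tau *\<^sub>R x + (1 - tau) *\<^sub>R xf"
  defines "xf1 \<equiv> xg + (2 * tau / (2 - tau)) *\<^sub>R (x1 - x)"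
  shows "- 2 * ((dr xg - dr xs) \<bullet> (x1 - xs))
    = - ((2-tau)/tau * bregman r dr xf1 xs) + (2*(1-tau)/tau) * bregman r dr xf xs - bregman r dr xg xs
      + (2-tau)/tau * bregman r dr xf1 xg - 2 * bregman r dr xs xg - (2*(1-tau)/tau) * bregman r dr xf xg"
proof -
  define gg ys where "gg = dr xg" and "ys = dr xs"
  have e1: "ys \<bullet> (xf1 - xs) = tau * (ys \<bullet> (x - xs)) + (1-tau) * (ys \<bullet> (xf - xs)) + (2*tau/(2-tau)) * (ys \<bullet> (x1 - x))"
    unfolding xf1_def xg_def by (simp add: inner_simps algebra_simps) (simp add: diff_divide_distrib add_divide_distrib)
  have e2: "gg \<bullet> (xf1 - xg) = (2*tau/(2-tau)) * (gg \<bullet> (x1 - x))"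
    unfolding xf1_def by (simp add: inner_simps)
  have e3: "ys \<bullet> (xg - xs) = tau * (ys \<bullet> (x - xs)) + (1-tau) * (ys \<bullet> (xf - xs))"
    unfolding xg_def by (simp add: inner_simps algebra_simps)
  have e4: "gg \<bullet> (xs - xg) = - tau * (gg \<bullet> (x - xs)) - (1-tau) * (gg \<bullet> (xf - xs))"
    unfolding xg_def by (simp add: inner_simps algebra_simps)
  have e5: "gg \<bullet> (xf - xg) = tau * (gg \<bullet> (xf - xs)) - tau * (gg \<bullet> (x - xs))"
    unfolding xg_def by (simp add: inner_simps algebra_simps)
  have e6: "(gg - ys) \<bullet> (x1 - xs) = gg \<bullet> (x1 - x) + gg \<bullet> (x - xs) - ys \<bullet> (x1 - x) - ys \<bullet> (x - xs)"
    by (simp add: inner_simps algebra_simps)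
  have t2: "2 - tau \<noteq> 0" using t by simp
  show ?thesis unfolding bregman_def gg_def[symmetric] ys_def[symmetric] e1 e2 e3 e4 e5 e6
    by (rule extrapolation_coefficient_identity) (use t t2 in \<open>simp_all add: field_simps\<close>)
qed

lemma smooth_extrapolation_bound:
  fixes r :: "'a::real_inner \<Rightarrow> real"
  assumes t: "0 < tau" "tau < 1"
    and smooth: "\<And>u v. bregman r dr u v \<le> L/2 * (norm (u - v))^2"
    and step_size: "2 * tau * L / (2 - tau) \<le> 1 / (2 * eta)"
    and xf1: "xf1 = xg + (2 * tau / (2 - tau)) *\<^sub>R (x1 - x)"
  shows "((2-tau)/tau) * bregman r dr xf1 xg \<le> 1/(2*eta) * (norm (x1 - x))^2"
proof -
  have t2: "0 < 2 - tau" using t by simp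
  have "((2-tau)/tau) * bregman r dr xf1 xg \<le> ((2-tau)/tau) * (L/2 * (norm (xf1 - xg))^2)"
    using smooth t t2 by (intro mult_left_mono) auto
  also have "(norm (xf1 - xg))^2 = (2 * tau / (2 - tau))^2 * (norm (x1 - x))^2"
    unfolding xf1 by (simp add: power_mult_distrib power_divide power2_abs)
  also have "((2-tau)/tau) * (L/2 * ((2 * tau / (2 - tau))^2 * (norm (x1 - x))^2))
      = (2 * tau * L / (2 - tau)) * (norm (x1 - x))^2"
  proof -
    have "s/tau * (L/2 * ((2*tau/s)^2 * S)) = 2*tau*L/s * S" if "s \<noteq> 0" for s S
      using that t by (simp add: field_simps power2_eq_square)
    then show ?thesis using t2 by simp
  qed
  also have "\<dots> \<le> 1/(2*eta) * (norm (x1 - x))^2"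
    using step_size by (intro mult_right_mono) auto
  finally show ?thesis .
qed

lemma x_block_inequality:
  fixes r :: "'a::real_inner \<Rightarrow> real"
  assumes t: "0 < tau" "tau < 1" and eta: "0 < eta" and alpha: "0 \<le> alpha"
    and convex: "\<And>u v. alpha/2 * (norm (u - v))^2 \<le> bregman r dr u v"
    and smooth: "\<And>u v. bregman r dr u v \<le> L/2 * (norm (u - v))^2"
    and cocoercive: "\<And>u v. 1/(2*L) * (norm (dr u - dr v))^2 \<le> bregman r dr u v"
    and step_size: "2 * tau * L / (2 - tau) \<le> 1 / (2 * eta)"
    and xg: "xg = tau *\<^sub>R x + (1 - tau) *\<^sub>R xf"
    and xf1: "xf1 = xg + (2 * tau / (2 - tau)) *\<^sub>R (x1 - x)"
    and step: "x1 = x + (eta * alpha) *\<^sub>R (xg - x1) - eta *\<^sub>R dr xg + eta *\<^sub>R y1"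
  shows "(1/eta) * (norm (x1 - xs))^2 + alpha * (norm (x1 - xs))^2 + ((2-tau)/tau) * bregman r dr xf1 xs
      + 1/(2*eta) * (norm (x1 - x))^2 + alpha * (norm (xg - x1))^2 + 1/(2*L) * (norm (dr xg - dr xs))^2
    \<le> (1/eta) * (norm (x - xs))^2 + (2*(1-tau)/tau) * bregman r dr xf xs + 2 * ((y1 - dr xs) \<bullet> (x1 - xs))"
proof -
  have scaled_step: "(1/eta) *\<^sub>R (x1 - x) = alpha *\<^sub>R (xg - x1) - (dr xg - dr xs) + (y1 - dr xs)"
  proof -
    have "x1 - x = eta *\<^sub>R (alpha *\<^sub>R (xg - x1) - (dr xg - dr xs) + (y1 - dr xs))"
      using step by (simp add: algebra_simps)
    then show ?thesis using eta by simp
  qed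
  have "(1/eta) * ((norm (x1 - xs))^2 - (norm (x - xs))^2 + (norm (x1 - x))^2)
      = 2 * (((1/eta) *\<^sub>R (x1 - x)) \<bullet> (x1 - xs))"
    using double_inner_diff_self[of "x1 - xs" "x - xs"] by simp
  also have "\<dots> = alpha * (2 * ((xg - x1) \<bullet> (x1 - xs))) - 2 * ((dr xg - dr xs) \<bullet> (x1 - xs))
      + 2 * ((y1 - dr xs) \<bullet> (x1 - xs))"
    unfolding scaled_step by (simp add: inner_simps algebra_simps)
  also have "2 * ((xg - x1) \<bullet> (x1 - xs)) = (norm (xg - xs))^2 - (norm (x1 - xs))^2 - (norm (xg - x1))^2"
    using double_inner_diff_other[of "xg - xs" "x1 - xs"] by simp
  finally have energy: "(1/eta) * ((norm (x1 - xs))^2 - (norm (x - xs))^2 + (norm (x1 - x))^2)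
      = alpha * ((norm (xg - xs))^2 - (norm (x1 - xs))^2 - (norm (xg - x1))^2)
        - 2 * ((dr xg - dr xs) \<bullet> (x1 - xs)) + 2 * ((y1 - dr xs) \<bullet> (x1 - xs))" .
  have extrapolation: "((2-tau)/tau) * bregman r dr xf1 xg \<le> 1/(2*eta) * (norm (x1 - x))^2"
    using smooth_extrapolation_bound[OF t smooth step_size xf1] .
  have "0 \<le> alpha/2 * (norm (xf - xg))^2" using alpha by simp
  hence "0 \<le> (2*(1-tau)/tau) * bregman r dr xf xg" using convex[of xf xg] t by simp
  moreover have "alpha * (norm (xg - xs))^2 \<le> bregman r dr xg xs + bregman r dr xs xg"
    using convex[of xg xs] convex[of xs xg] by (simp add: norm_minus_commute)
  moreover have "1/(2*L) * (norm (dr xg - dr xs))^2 \<le> bregman r dr xs xg"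
    using cocoercive[of xs xg] by (simp add: norm_minus_commute)
  moreover have "- 2 * ((dr xg - dr xs) \<bullet> (x1 - xs))
    = - ((2-tau)/tau * bregman r dr xf1 xs) + (2*(1-tau)/tau) * bregman r dr xf xs - bregman r dr xg xs
      + (2-tau)/tau * bregman r dr xf1 xg - 2 * bregman r dr xs xg - (2*(1-tau)/tau) * bregman r dr xf xg"
    unfolding xf1 xg by (rule bregman_extrapolation_identity[OF t])
  ultimately show ?thesis using energy extrapolation
    unfolding distrib_left right_diff_distrib by linarith
qed

lemma y_block_identity:
  fixes a a1 g Hy X1 :: "'a::real_inner"
  assumes th: "0 < theta"
    and step: "a1 - a = (theta*beta) *\<^sub>R (g - a1) - theta *\<^sub>R Hy + (theta*nu) *\<^sub>R a1 - theta *\<^sub>R X1"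
  shows "(1/theta) * (norm a1)^2 - (1/theta) * (norm a)^2 + (1/theta) * (norm (a1 - a))^2
     = beta * (norm g)^2 - beta * (norm a1)^2 - beta * (norm (g - a1))^2 - 2 * (Hy \<bullet> a1)
       + 2 * nu * (norm a1)^2 - 2 * (X1 \<bullet> a1)"
proof -
  have s: "(1/theta) *\<^sub>R (a1 - a) = beta *\<^sub>R (g - a1) - Hy + nu *\<^sub>R a1 - X1"
    using th unfolding step by (simp add: algebra_simps)
  have "(1/theta) * ((norm a1)^2 - (norm a)^2 + (norm (a1 - a))^2) = 2 * (((1/theta) *\<^sub>R (a1 - a)) \<bullet> a1)"
    using double_inner_diff_self[of a1 a] by simp
  also have "\<dots> = beta * (2 * ((g - a1) \<bullet> a1)) - 2 * (Hy \<bullet> a1) + 2 * nu * (a1 \<bullet> a1) - 2 * (X1 \<bullet> a1)"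
    unfolding s by (simp add: inner_simps algebra_simps)
  also have "\<dots> = beta * (norm g)^2 - beta * (norm a1)^2 - beta * (norm (g - a1))^2 - 2 * (Hy \<bullet> a1)
      + 2 * nu * (norm a1)^2 - 2 * (X1 \<bullet> a1)"
    unfolding double_inner_diff_other by (simp add: algebra_simps power2_norm_eq_inner)
  finally show ?thesis by (simp only: distrib_left right_diff_distrib)
qed

text \<open>The \<open>z\<close>-iterates are handled through preimages \<open>p\<close> under \<open>W\<close>, so that the squared
  \<open>W\<^sup>\<dagger>\<close>-norm of \<open>W p\<close> is the quadratic form \<open>W p \<bullet> p\<close>.\<close>

lemma z_block_identity:
  fixes W :: "'a::real_inner \<Rightarrow> 'a"
  assumes lin: "linear W" and sym: "\<And>u v. W u \<bullet> v = u \<bullet> W v" and lam: "0 < lam"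
    and step: "W p1 - W p = (lam*gamma) *\<^sub>R (W pg - W p1) - lam *\<^sub>R W Hz"
  shows "(1/lam) * (W p1 \<bullet> p1) - (1/lam) * (W p \<bullet> p) + (1/lam) * (W (p1 - p) \<bullet> (p1 - p))
     = gamma * (W pg \<bullet> pg) - gamma * (W p1 \<bullet> p1) - gamma * (W (pg - p1) \<bullet> (pg - p1)) - 2 * (Hz \<bullet> W p1)"
proof -
  have s: "(1/lam) *\<^sub>R W (p1 - p) = gamma *\<^sub>R W (pg - p1) - W Hz"
    using lam unfolding linear_diff[OF lin] step by (simp add: algebra_simps)
  have "(1/lam) * ((W p1 \<bullet> p1) - (W p \<bullet> p) + (W (p1 - p) \<bullet> (p1 - p))) = 2 * (((1/lam) *\<^sub>R W (p1 - p)) \<bullet> p1)"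
    using selfadjoint_double_inner_diff_self[OF lin sym, of p1 p] by simp
  also have "\<dots> = gamma * (2 * (W (pg - p1) \<bullet> p1)) - 2 * (W Hz \<bullet> p1)"
    unfolding s by (simp add: inner_simps algebra_simps)
  also have "2 * (W (pg - p1) \<bullet> p1) = W pg \<bullet> pg - W p1 \<bullet> p1 - W (pg - p1) \<bullet> (pg - p1)"
    using selfadjoint_double_inner_diff_self[OF lin sym, of pg p1] by (simp add: inner_diff_right)
  also have "W Hz \<bullet> p1 = Hz \<bullet> W p1" by (rule sym)
  finally show ?thesis by (simp only: distrib_left right_diff_distrib)
qed

definition h_quad :: "real \<Rightarrow> real \<Rightarrow> 'a::real_inner \<Rightarrow> 'a \<Rightarrow> real" where
  "h_quad mu nu u v = 1/mu * (norm (u + v))^2 + nu/2 * (norm u)^2"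

lemma h_quad_nonneg: "0 < mu \<Longrightarrow> 0 \<le> nu \<Longrightarrow> 0 \<le> h_quad mu nu u v"
  unfolding h_quad_def by simp

lemma bregman_h_quad:
  fixes u v u0 v0 :: "'a::real_inner"
  assumes "mu \<noteq> 0"
  shows "bregman (\<lambda>(u, v). 1 / mu * (norm (u + v))\<^sup>2 + nu / 2 * (norm u)\<^sup>2)
                 (\<lambda>(u, v). ((2 / mu) *\<^sub>R (u + v) + nu *\<^sub>R u, (2 / mu) *\<^sub>R (u + v))) (u, v) (u0, v0)
       = h_quad mu nu (u - u0) (v - v0)"
  unfolding bregman_def h_quad_def power2_norm_eq_inner using assms
  by (simp add: inner_simps inner_commute field_simps)

lemma h_quad_regrouping:
  fixes N1 N0 Nd Ng Nfg M1 M0 Md Mg Mfg s mu nu :: real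
  assumes "s \<noteq> 0" "mu \<noteq> 0"
  shows "(2/mu) * (- (1/s) * N1 + ((1-s)/s) * N0 + (1/s) * Nd - Ng - ((1-s)/s) * Nfg)
       + nu * (- (1/s) * M1 + ((1-s)/s) * M0 + (1/s) * Md - Mg - ((1-s)/s) * Mfg)
   = - ((2/s) * (1/mu * N1 + nu/2 * M1)) + (2*(1-s)/s) * (1/mu * N0 + nu/2 * M0)
     + (2/s) * (1/mu * Nd + nu/2 * Md)
     - 2 * (1/mu * Ng + nu/2 * Mg) - (2*(1-s)/s) * (1/mu * Nfg + nu/2 * Mfg)"
  using assms by (simp add: field_simps)

lemma h_block_identity:
  fixes a af a1 c cf c1 g hz af1 cf1 :: "'a::real_inner"
  assumes s: "0 < s" and mu: "0 < mu"
    and g: "g = s *\<^sub>R a + (1 - s) *\<^sub>R af" and hz: "hz = s *\<^sub>R c + (1 - s) *\<^sub>R cf"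
    and af1: "af1 = g + s *\<^sub>R (a1 - a)" and cf1: "cf1 = hz + s *\<^sub>R (c1 - c)"
  shows "- 2 * (((2/mu) *\<^sub>R (g + hz) + nu *\<^sub>R g) \<bullet> a1) - 2 * (((2/mu) *\<^sub>R (g + hz)) \<bullet> c1)
    = - ((2/s) * h_quad mu nu af1 cf1) + (2*(1-s)/s) * h_quad mu nu af cf
      + (2/s) * h_quad mu nu (af1 - g) (cf1 - hz)
      - 2 * h_quad mu nu g hz - (2*(1-s)/s) * h_quad mu nu (af - g) (cf - hz)"
proof -
  have sum: "- 2 * ((g + hz) \<bullet> (a1 + c1)) = - (1/s) * (norm (af1 + cf1))^2
      + ((1-s)/s) * (norm (af + cf))^2 + (1/s) * (norm ((af1 + cf1) - (g + hz)))^2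
      - (norm (g + hz))^2 - ((1-s)/s) * (norm ((af + cf) - (g + hz)))^2"
  proof -
    have "g + hz = s *\<^sub>R (a + c) + (1 - s) *\<^sub>R (af + cf)" unfolding g hz by (simp add: algebra_simps)
    moreover have "af1 + cf1 = (g + hz) + s *\<^sub>R ((a1 + c1) - (a + c))"
      unfolding af1 cf1 by (simp add: algebra_simps)
    ultimately show ?thesis using extrapolation_inner_identity[OF s, of "a + c" "af + cf" "a1 + c1"] by simp
  qed
  have first: "- 2 * (g \<bullet> a1) = - (1/s) * (norm af1)^2 + ((1-s)/s) * (norm af)^2 + (1/s) * (norm (af1 - g))^2
          - (norm g)^2 - ((1-s)/s) * (norm (af - g))^2"
    unfolding af1 g by (rule extrapolation_inner_identity[OF s])
  have split: "- 2 * (((2/mu) *\<^sub>R (g + hz) + nu *\<^sub>R g) \<bullet> a1) - 2 * (((2/mu) *\<^sub>R (g + hz)) \<bullet> c1)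
      = (2/mu) * (- 2 * ((g + hz) \<bullet> (a1 + c1))) + nu * (- 2 * (g \<bullet> a1))"
    by (simp add: inner_simps algebra_simps)
  have differences: "(af1 + cf1) - (g + hz) = (af1 - g) + (cf1 - hz)" "(af + cf) - (g + hz) = (af - g) + (cf - hz)"
    by simp_all
  show ?thesis unfolding split sum first h_quad_def differences
    by (rule h_quad_regrouping) (use s mu in auto)
qed

lemma h_quad_increment_bound:
  fixes d e :: "'a::real_inner"
  assumes s: "0 < s" and mu: "0 < mu" and nu: "0 \<le> nu" and lam: "0 < lam" and lmax: "0 < lmax"
    and c1: "4 * s/mu + s * nu \<le> 1/theta" and c2: "4 * s/mu \<le> 1/(lam * lmax)"
    and e: "(norm e)^2 \<le> lmax * Q"
  shows "(2/s) * h_quad mu nu (s *\<^sub>R d) (s *\<^sub>R e) \<le> (1/theta) * (norm d)^2 + (1/lam) * Q"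
proof -
  have "norm (s *\<^sub>R d + s *\<^sub>R e) = s * norm (d + e)"
    using s by (metis scaleR_add_right norm_scaleR abs_of_pos)
  hence "(2/s) * h_quad mu nu (s *\<^sub>R d) (s *\<^sub>R e) = (2 * s/mu) * (norm (d + e))^2 + (s * nu) * (norm d)^2"
    unfolding h_quad_def using s mu by (simp add: field_simps power2_eq_square)
  also have "\<dots> \<le> (2 * s/mu) * (2 * (norm d)^2 + 2 * (norm e)^2) + (s * nu) * (norm d)^2"
    using s mu nu norm_add_sq_le[of d e] by (intro add_mono mult_left_mono) auto
  also have "\<dots> = (4 * s/mu + s * nu) * (norm d)^2 + (4 * s/mu) * (norm e)^2" by (simp add: algebra_simps)
  also have "\<dots> \<le> (1/theta) * (norm d)^2 + (1/(lam * lmax)) * (lmax * Q)"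
    using c1 c2 e lam lmax by (intro add_mono mult_right_mono mult_mono) auto
  finally show ?thesis using lmax by simp
qed

lemma h_quad_lower_bound:
  fixes g hz :: "'a::real_inner"
  assumes b: "0 \<le> beta" "beta \<le> 1/mu" "3 * beta \<le> nu" and mu: "0 < mu"
    and q: "lmin * qg \<le> (norm hz)^2"
  shows "beta * (norm g)^2 + (beta * lmin) * qg \<le> 2 * h_quad mu nu g hz"
proof -
  have "(beta * lmin) * qg \<le> beta * (norm hz)^2" using q b by (simp add: mult.assoc mult_left_mono)
  also have "\<dots> \<le> beta * (2 * (norm (g + hz))^2 + 2 * (norm g)^2)"
    using norm_add_sq_le[of "g + hz" "- g"] b by (intro mult_left_mono) auto
  finally have "(beta * lmin) * qg \<le> beta * (2 * (norm (g + hz))^2 + 2 * (norm g)^2)" .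
  moreover have "(2 * beta) * (norm (g + hz))^2 \<le> (2/mu) * (norm (g + hz))^2"
    using b by (intro mult_right_mono) auto
  moreover have "3 * beta * (norm g)^2 \<le> nu * (norm g)^2" using b by (intro mult_right_mono) auto
  ultimately show ?thesis unfolding h_quad_def by (simp add: algebra_simps)
qed

lemma norm_sq_le_three_terms:
  fixes a1 u v w :: "'a::real_inner"
  assumes a1: "a1 = p *\<^sub>R u + q *\<^sub>R v + w" and c0: "0 \<le> c0"
    and A: "3 * c0 * p^2 \<le> A" and B: "3 * c0 * q^2 \<le> B" and C: "3 * c0 \<le> C"
  shows "c0 * (norm a1)^2 \<le> A * (norm u)^2 + B * (norm v)^2 + C * (norm w)^2"
proof -
  have "c0 * (norm a1)^2 \<le> c0 * (3 * ((norm (p *\<^sub>R u))^2 + (norm (q *\<^sub>R v))^2 + (norm w)^2))"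
    unfolding a1 using norm_add3_sq_le c0 by (rule mult_left_mono)
  also have "\<dots> = (3 * c0 * p^2) * (norm u)^2 + (3 * c0 * q^2) * (norm v)^2 + (3 * c0) * (norm w)^2"
    by (simp add: power_mult_distrib algebra_simps)
  also have "\<dots> \<le> A * (norm u)^2 + B * (norm v)^2 + C * (norm w)^2"
    using A B C by (intro add_mono mult_right_mono) auto
  finally show ?thesis .
qed

section \<open>The parameters\<close>

text \<open>The parameters of the theorem, written in terms of \<open>a = \<surd>\<mu>\<close>, \<open>b = \<surd>L\<close>,
  \<open>p = \<surd>\<lambda>\<^sup>+\<^sub>m\<^sub>i\<^sub>n(W)\<close> and \<open>q = \<surd>\<lambda>\<^sub>m\<^sub>a\<^sub>x(W)\<close>.\<close>

locale algorithm3_parameters =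
  fixes a b p q mu L lmin lmax tau alpha eta sigma nu beta theta gamma lam :: real
  assumes a_pos: "0 < a" and a_le_b: "a \<le> b" and p_pos: "0 < p" and p_le_q: "p \<le> q"
    and roots: "mu = a^2" "L = b^2" "lmin = p^2" "lmax = q^2"
      "tau = a/(2*b)" "eta = 1/(2*(a*b))" "alpha = a^2/2" "sigma = a*p/(18*(b*q))"
      "nu = 3/(80*b^2)" "beta = 1/(80*b^2)" "theta = 18*(a*b*q)/(5*p)"
      "gamma = p^2/(80*b^2)" "lam = 9*(a*b)/(2*(p*q))"
begin

lemma b_pos: "0 < b" and q_pos: "0 < q"
  using a_pos a_le_b p_pos p_le_q by linarith+

lemma lmax_pos: "0 < lmax"
  unfolding roots using q_pos by simp

lemma parameters_pos:
  "0 < tau" "tau < 1" "0 < eta" "0 < alpha" "0 < sigma" "0 < nu" "0 < beta" "0 < theta"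
  "0 < gamma" "0 < lam"
  unfolding roots using a_pos a_le_b p_pos b_pos q_pos by (simp_all add: field_simps)

lemma primal_step_size: "2 * tau * L / (2 - tau) \<le> 1 / (2 * eta)"
proof -
  have "1 / (2 * eta) = a * b" "2 * tau * L = a * b" "1 \<le> 2 - tau"
    unfolding roots using a_pos a_le_b b_pos by (simp_all add: field_simps power2_eq_square)
  then show ?thesis using a_pos b_pos by (simp add: divide_le_eq)
qed

text \<open>With \<open>R = a/b\<close> and \<open>T = p/q\<close>, both in \<open>(0, 1]\<close>, one has \<open>\<tau> = R/2\<close>, \<open>\<eta>\<alpha> = R/4\<close>,
  \<open>\<sigma> = RT/18\<close> and \<open>\<lambda>\<gamma> = 9RT/160\<close>.\<close>

lemma rate_parameter_bounds: "2 * sigma \<le> tau" "sigma \<le> eta * alpha" "sigma \<le> lam * gamma"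
proof -
  define R T where "R = a / b" and "T = p / q"
  have R: "0 < R" "R \<le> 1" and T: "0 < T" "T \<le> 1"
    unfolding R_def T_def using a_pos a_le_b p_pos p_le_q b_pos q_pos by auto
  have "R * T \<le> R" using R T by (simp add: mult_left_le)
  moreover have "0 < R * T" using R T by simp
  moreover have "tau = R / 2" "sigma = R * T / 18" "eta * alpha = R / 4" "lam * gamma = R * T * (9/160)"
    unfolding roots R_def T_def using a_pos p_pos b_pos q_pos by (simp_all add: field_simps power2_eq_square)
  ultimately show "2 * sigma \<le> tau" "sigma \<le> eta * alpha" "sigma \<le> lam * gamma" by simp_all
qed

lemma dual_parameter_bounds:
  "4 * sigma / mu + sigma * nu \<le> 1 / theta" "4 * sigma / mu \<le> 1 / (lam * lmax)"
  "beta \<le> 1 / mu" "3 * beta \<le> nu" "gamma = beta * lmin"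
proof -
  define Y where "Y = p / (18 * (a * b * q))"
  have Y: "0 < Y" unfolding Y_def using a_pos p_pos b_pos q_pos by simp
  have aa: "a * a \<le> b * b" using a_pos a_le_b by (intro mult_mono) auto
  define Z where "Z = (18 * (a * a)) / (480 * (b * b))"
  have "4 * sigma / mu = 4 * Y" "1 / (lam * lmax) = 4 * Y" "1 / theta = 5 * Y" "sigma * nu = Z * Y"
    unfolding roots Y_def Z_def using a_pos p_pos b_pos q_pos by (simp_all add: field_simps power2_eq_square)
  moreover have "Z * Y \<le> Y"
  proof (rule mult_left_le_one_le)
    have "18 * (a * a) \<le> 480 * (b * b)" using aa zero_le_square[of b] by linarith
    then show "Z \<le> 1" unfolding Z_def using b_pos by (simp add: divide_le_eq)
  qed (use Y in \<open>simp_all add: Z_def\<close>)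
  ultimately show "4 * sigma / mu + sigma * nu \<le> 1 / theta" "4 * sigma / mu \<le> 1 / (lam * lmax)"
    by simp_all
  have "a * a \<le> 80 * (b * b)" using aa zero_le_square[of b] by linarith
  then have "a^2 \<le> 80 * b^2" by (simp add: power2_eq_square)
  then show "beta \<le> 1 / mu" unfolding roots using a_pos b_pos by (intro divide_left_mono) auto
  show "3 * beta \<le> nu" "gamma = beta * lmin" unfolding roots by simp_all
qed

lemma coupling_parameter_bounds:
  defines "c0 \<equiv> sigma / theta + 2 * nu - beta"
  shows "0 \<le> c0" "3 * c0 \<le> 1 / (2 * L)" "3 * c0 * (1/eta)^2 \<le> 1 / (2 * eta)" "3 * c0 * alpha^2 \<le> alpha"
proof -
  define K where "K = 5 * (p * p) / (324 * (q * q)) + 1/16"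
  have c0: "c0 = K / (b * b)"
    unfolding c0_def K_def roots using a_pos p_pos b_pos q_pos by (simp add: field_simps power2_eq_square)
  have "p * p \<le> q * q" using p_pos p_le_q by (intro mult_mono) auto
  then have "0 \<le> K" "K \<le> 101/1296" unfolding K_def using q_pos by (simp_all add: field_simps)
  then have c0_le: "c0 \<le> (101/1296) / (b * b)" unfolding c0 by (intro divide_right_mono) simp_all
  show "0 \<le> c0" unfolding c0 using \<open>0 \<le> K\<close> by simp
  show "3 * c0 \<le> 1 / (2 * L)" using c0_le b_pos unfolding roots by (simp add: field_simps power2_eq_square)
  have aa: "a * a \<le> a * b" "a * a \<le> b * b" using a_pos a_le_b by (auto intro: mult_mono)
  have "3 * c0 * (1/eta)^2 \<le> 3 * ((101/1296) / (b * b)) * (1/eta)^2"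
    using c0_le by (intro mult_right_mono) auto
  also have "\<dots> = (1212/1296) * (a * a)"
    unfolding roots using a_pos b_pos by (simp add: field_simps power2_eq_square)
  also have "\<dots> \<le> a * b" using aa zero_le_square[of a] by linarith
  also have "a * b = 1 / (2 * eta)" unfolding roots by simp
  finally show "3 * c0 * (1/eta)^2 \<le> 1 / (2 * eta)" .
  have "3 * c0 * alpha \<le> 3 * ((101/1296) / (b * b)) * alpha"
    using c0_le parameters_pos(4) by (intro mult_right_mono) auto
  also have "\<dots> \<le> 1"
  proof -
    have "101 * (a * a) \<le> 864 * (b * b)" using aa zero_le_square[of b] by linarith
    then show ?thesis unfolding roots using b_pos by (simp add: field_simps power2_eq_square)
  qed
  finally have "(3 * c0 * alpha) * alpha \<le> 1 * alpha" using parameters_pos(4) by (intro mult_right_mono) auto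
  then show "3 * c0 * alpha^2 \<le> alpha" by (simp add: power2_eq_square mult.assoc)
qed

end

section \<open>The iteration\<close>

lemma exists_not_consensus:
  assumes "CARD('n) \<ge> 2"
  shows "\<exists>v :: real^'d^'n. v \<notin> consensus"
proof -
  have "\<not> CARD('n) \<le> Suc 0" using assms by simp
  then obtain i j :: 'n where "i \<noteq> j" by (auto simp: card_le_Suc0_iff_eq)
  then have "((\<chi> k. if k = i then (1::real^'d) else 0) :: real^'d^'n) \<notin> consensus"
    unfolding consensus_def by (auto simp: vec_eq_iff)
  then show ?thesis by blast
qed

lemma implicit_step_in_subspace:
  fixes x a b d :: "'a::real_vector"
  assumes S: "subspace S" and c: "0 \<le> c" and step: "x = a + c *\<^sub>R (b - x) - d"
    and "a \<in> S" "b \<in> S" "d \<in> S"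
  shows "x \<in> S"
proof -
  have "(1 + c) *\<^sub>R x - (a + c *\<^sub>R b - d) = x - (a + c *\<^sub>R (b - x) - d)"
    by (simp add: algebra_simps)
  also have "\<dots> = 0" using step by (rule right_minus_eq[THEN iffD2])
  finally have "(1 + c) *\<^sub>R x = a + c *\<^sub>R b - d" by simp
  then have "(1 + c) *\<^sub>R x \<in> S" using assms by (simp add: subspace_add subspace_diff subspace_scale)
  then have "(1 / (1 + c)) *\<^sub>R ((1 + c) *\<^sub>R x) \<in> S" by (rule subspace_scale[OF S])
  then show ?thesis using c by simp
qed

text \<open>The setting of the theorem, except that only \<open>z\<^sub>f\<^sup>0 \<in> range W\<close> is assumed instead of
  \<open>z\<^sub>f\<^sup>0 = z\<^sup>0\<close>.\<close>

locale algorithm3 =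
  fixes F :: "real^'d^'n \<Rightarrow> real" and gradF :: "real^'d^'n \<Rightarrow> real^'d^'n"
    and W :: "real^'d^'n \<Rightarrow> real^'d^'n" and mu L :: real and xstar :: "real^'d^'n"
    and x y z xf yf zf :: "nat \<Rightarrow> real^'d^'n"
    and tau alpha eta sigma nu beta theta gamma lam :: real
  assumes n2: "CARD('n) \<ge> 2"
    and F_grad: "\<And>u. (F has_derivative (\<lambda>h. gradF u \<bullet> h)) (at u)"
    and mu_pos: "0 < mu" and mu_le_L: "mu \<le> L"
    and F_sc: "strongly_convex mu F"
    and F_smooth: "lipschitz_gradient L gradF"
    and W_lin: "linear W"
    and W_sym: "\<And>u v. W u \<bullet> v = u \<bullet> W v"
    and W_psd: "\<And>u. 0 \<le> W u \<bullet> u"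
    and W_ker: "{u. W u = 0} = consensus"
    and xstar_cons: "xstar \<in> consensus"
    and xstar_min: "\<And>u. u \<in> consensus \<Longrightarrow> F xstar \<le> F u"
    and tau_def: "tau = 1/2 * sqrt (mu / L)"
    and alpha_def: "alpha = mu / 2"
    and eta_def: "eta = 1 / (2 * sqrt (mu * L))"
    and sigma_def: "sigma = 1/18 * sqrt (mu * lambda_min_pos W / (L * lambda_max W))"
    and nu_def: "nu = 3 / (80 * L)"
    and beta_def: "beta = 1 / (80 * L)"
    and theta_def: "theta = 18 * sqrt (mu * L * lambda_max W) / (5 * sqrt (lambda_min_pos W))"
    and gamma_def: "gamma = lambda_min_pos W / (80 * L)"
    and lam_def: "lam = 9 * sqrt (mu * L) / (2 * sqrt (lambda_min_pos W * lambda_max W))"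
    and z0: "z 0 \<in> range W" and zf0: "zf 0 \<in> range W"
    and step_x: "\<And>k. x (Suc k) = x k
        + (eta * alpha) *\<^sub>R ((tau *\<^sub>R x k + (1 - tau) *\<^sub>R xf k) - x (Suc k))
        - eta *\<^sub>R (gradF (tau *\<^sub>R x k + (1 - tau) *\<^sub>R xf k)
                     - (mu / 2) *\<^sub>R (tau *\<^sub>R x k + (1 - tau) *\<^sub>R xf k))
        + eta *\<^sub>R y (Suc k)"
    and step_y: "\<And>k. y (Suc k) = y k
        + (theta * beta) *\<^sub>R ((sigma *\<^sub>R y k + (1 - sigma) *\<^sub>R yf k) - y (Suc k))
        - theta *\<^sub>R ((2 / mu) *\<^sub>R ((sigma *\<^sub>R y k + (1 - sigma) *\<^sub>R yf k)
                                   + (sigma *\<^sub>R z k + (1 - sigma) *\<^sub>R zf k))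
                      + nu *\<^sub>R (sigma *\<^sub>R y k + (1 - sigma) *\<^sub>R yf k))
        + (theta * nu) *\<^sub>R y (Suc k)
        - theta *\<^sub>R x (Suc k)"
    and step_z: "\<And>k. z (Suc k) = z k
        + (lam * gamma) *\<^sub>R ((sigma *\<^sub>R z k + (1 - sigma) *\<^sub>R zf k) - z (Suc k))
        - lam *\<^sub>R W ((2 / mu) *\<^sub>R ((sigma *\<^sub>R y k + (1 - sigma) *\<^sub>R yf k)
                                    + (sigma *\<^sub>R z k + (1 - sigma) *\<^sub>R zf k)))"
    and step_xf: "\<And>k. xf (Suc k) = (tau *\<^sub>R x k + (1 - tau) *\<^sub>R xf k)
        + (2 * tau / (2 - tau)) *\<^sub>R (x (Suc k) - x k)"
    and step_yf: "\<And>k. yf (Suc k) = (sigma *\<^sub>R y k + (1 - sigma) *\<^sub>R yf k)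
        + sigma *\<^sub>R (y (Suc k) - y k)"
    and step_zf: "\<And>k. zf (Suc k) = (sigma *\<^sub>R z k + (1 - sigma) *\<^sub>R zf k)
        + sigma *\<^sub>R (z (Suc k) - z k)"
begin

lemma W_nonzero: obtains w where "W w \<noteq> 0"
  using exists_not_consensus[OF n2] W_ker by blast

lemma spectral_norm_bounds:
  "(norm (W u))^2 \<le> lambda_max W * (W u \<bullet> u)"
  "u \<in> range W \<Longrightarrow> lambda_min_pos W * (W u \<bullet> u) \<le> (norm (W u))^2"
proof -
  obtain w where w: "W w \<noteq> 0" by (rule W_nonzero)
  show "(norm (W u))^2 \<le> lambda_max W * (W u \<bullet> u)"
    by (rule norm_image_sq_le_lambda_max[OF W_lin W_sym W_psd w])
  show "lambda_min_pos W * (W u \<bullet> u) \<le> (norm (W u))^2" if "u \<in> range W"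
    by (rule lambda_min_pos_le_norm_image_sq[OF W_lin W_sym W_psd w that])
qed

end

sublocale algorithm3 \<subseteq> algorithm3_parameters "sqrt mu" "sqrt L" "sqrt (lambda_min_pos W)"
  "sqrt (lambda_max W)" mu L "lambda_min_pos W" "lambda_max W" tau alpha eta sigma nu beta theta gamma lam
proof -
  obtain w where "W w \<noteq> 0" by (rule W_nonzero)
  from spectral_bounds(3,4)[OF W_lin W_sym W_psd this]
  have "0 < lambda_min_pos W" "lambda_min_pos W \<le> lambda_max W" .
  with mu_pos mu_le_L show "algorithm3_parameters (sqrt mu) (sqrt L) (sqrt (lambda_min_pos W))
      (sqrt (lambda_max W)) mu L (lambda_min_pos W) (lambda_max W) tau alpha eta sigma nu beta theta gamma lam"
    by unfold_locales
      (simp_all add: tau_def alpha_def eta_def sigma_def nu_def beta_def theta_def gamma_def lam_def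
        real_sqrt_mult real_sqrt_divide)
qed

context algorithm3
begin

definition "xg k = tau *\<^sub>R x k + (1 - tau) *\<^sub>R xf k"
definition "yg k = sigma *\<^sub>R y k + (1 - sigma) *\<^sub>R yf k"
definition "zg k = sigma *\<^sub>R z k + (1 - sigma) *\<^sub>R zf k"

definition "ystar = gradF xstar - (mu / 2) *\<^sub>R xstar"
definition "zstar = - gradF xstar"

definition "r = (\<lambda>u. F u - mu / 4 * (norm u)\<^sup>2)"
definition "dr = (\<lambda>u. gradF u - (mu / 2) *\<^sub>R u)"

definition "ey k = y k - ystar"
definition "eyf k = yf k - ystar"
definition "eyg k = yg k - ystar"
definition "ez k = z k - zstar"
definition "ezf k = zf k - zstar"
definition "ezg k = zg k - zstar"

definition "pz k = Wdag W (ez k)"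
definition "pzf k = Wdag W (ezf k)"
definition "pzg k = sigma *\<^sub>R pz k + (1 - sigma) *\<^sub>R pzf k"

definition "distance_energy k =
  1/eta * (norm (x k - xstar))^2 + 1/theta * (norm (ey k))^2 + 1/lam * (W (pz k) \<bullet> pz k)"

text \<open>The function \<open>\<Psi>\<close> of the theorem, in which \<open>\<rho> = \<sigma>\<close>.\<close>

definition "lyapunov k =
  (1 + sigma) * (1 / eta * (norm (x k - xstar))\<^sup>2 + 1 / theta * (norm (y k - ystar))\<^sup>2
                 + 1 / lam * Wdag_sqnorm W (z k - zstar))
  + (2 - tau) / tau * bregman r dr (xf k) xstar
  + 2 / sigma * bregman (\<lambda>(u, v). 1 / mu * (norm (u + v))\<^sup>2 + nu / 2 * (norm u)\<^sup>2)
                        (\<lambda>(u, v). ((2 / mu) *\<^sub>R (u + v) + nu *\<^sub>R u, (2 / mu) *\<^sub>R (u + v)))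
                        (yf k, zf k) (ystar, zstar)"

lemma W_xstar: "W xstar = 0"
  using xstar_cons W_ker by blast

lemma dr_apply: "dr u = gradF u - (mu / 2) *\<^sub>R u"
  by (simp add: dr_def)

lemma dr_xstar: "dr xstar = ystar"
  by (simp add: dr_def ystar_def)

lemma ystar_zstar: "(2/mu) *\<^sub>R (ystar + zstar) = - xstar"
  using mu_pos by (simp add: ystar_def zstar_def)

text \<open>Optimality of \<open>x\<^sup>*\<close> on the consensus space \<open>ker W\<close> puts \<open>\<nabla>F(x\<^sup>*)\<close> into
  \<open>(ker W)\<^sup>\<bottom> = range W\<close>.\<close>

lemma gradF_xstar_in_range: "gradF xstar \<in> range W"
proof (rule orthogonal_kernel_in_range[OF W_lin W_sym])
  fix c assume "W c = 0"
  then have "c \<in> consensus" using W_ker by blast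
  have "xstar + t *\<^sub>R c \<in> consensus" for t :: real
    unfolding consensus_def mem_Collect_eq
  proof (intro allI)
    fix i j
    have "xstar $ i = xstar $ j" "c $ i = c $ j"
      using xstar_cons \<open>c \<in> consensus\<close> unfolding consensus_def by blast+
    then show "(xstar + t *\<^sub>R c) $ i = (xstar + t *\<^sub>R c) $ j" by simp
  qed
  then have "gradF xstar \<bullet> c = 0"
    by (intro gradient_orthogonal_at_line_minimum[OF F_grad] xstar_min)
  then show "c \<bullet> gradF xstar = 0" by (simp add: inner_commute)
qed

lemma range_W_subspace: "subspace (range W)"
  using W_lin by (simp add: linear_subspace_image)

lemma z_iterates_in_range: "z k \<in> range W \<and> zf k \<in> range W"
proof (induction k)
  case 0
  show ?case using z0 zf0 by simp
next
  case (Suc k)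
  have zg: "zg k \<in> range W"
    using Suc range_W_subspace unfolding zg_def by (simp add: subspace_add subspace_scale)
  have z1: "z (Suc k) \<in> range W"
  proof (rule implicit_step_in_subspace[OF range_W_subspace _ step_z[of k, folded zg_def yg_def]])
    show "0 \<le> lam * gamma" using parameters_pos by simp
  qed (use Suc zg range_W_subspace in \<open>auto simp: subspace_scale\<close>)
  have "zf (Suc k) \<in> range W"
    unfolding step_zf[of k, folded zg_def] using zg z1 Suc range_W_subspace
    by (intro subspace_add subspace_scale subspace_diff) auto
  with z1 show ?case by simp
qed

lemma preimages:
  "pz k \<in> range W" "W (pz k) = ez k" "pzf k \<in> range W" "W (pzf k) = ezf k"
  "pzg k \<in> range W" "W (pzg k) = ezg k"
proof -
  have zstar: "zstar \<in> range W"
    unfolding zstar_def using gradF_xstar_in_range range_W_subspace by (simp add: subspace_neg)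
  have "ez k \<in> range W" "ezf k \<in> range W"
    unfolding ez_def ezf_def using z_iterates_in_range[of k] zstar range_W_subspace
    by (auto intro: subspace_diff)
  then show pz: "pz k \<in> range W" "W (pz k) = ez k" "pzf k \<in> range W" "W (pzf k) = ezf k"
    unfolding pz_def pzf_def by (auto intro: Wdag_inverse[OF W_lin W_sym])
  show "pzg k \<in> range W"
    unfolding pzg_def using pz range_W_subspace by (intro subspace_add subspace_scale) auto
  have "W (pzg k) = sigma *\<^sub>R W (pz k) + (1 - sigma) *\<^sub>R W (pzf k)"
    unfolding pzg_def using W_lin by (simp add: linear_add linear_scale)
  then show "W (pzg k) = ezg k"
    unfolding pz ez_def ezf_def ezg_def zg_def by (simp add: algebra_simps)
qed

lemma r_bregman_bounds:
  "alpha/2 * (norm (u - v))^2 \<le> bregman r dr u v"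
  "bregman r dr u v \<le> L/2 * (norm (u - v))^2"
  "1/(2*L) * (norm (dr u - dr v))^2 \<le> bregman r dr u v"
  using bregman_shifted_bounds[OF F_grad F_sc F_smooth mu_pos mu_le_L, of u v]
  unfolding alpha_def r_def dr_def by simp_all

lemma x_step_bound:
  "(1/eta) * (norm (x (Suc k) - xstar))^2 + alpha * (norm (x (Suc k) - xstar))^2
     + ((2-tau)/tau) * bregman r dr (xf (Suc k)) xstar
     + 1/(2*eta) * (norm (x (Suc k) - x k))^2 + alpha * (norm (xg k - x (Suc k)))^2
     + 1/(2*L) * (norm (dr (xg k) - ystar))^2
   \<le> (1/eta) * (norm (x k - xstar))^2 + (2*(1-tau)/tau) * bregman r dr (xf k) xstar
     + 2 * (ey (Suc k) \<bullet> (x (Suc k) - xstar))"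
proof -
  have "0 \<le> alpha" using parameters_pos by simp
  from x_block_inequality[where xs = xstar, OF parameters_pos(1-3) this r_bregman_bounds
      primal_step_size xg_def step_xf[of k, folded xg_def] step_x[of k, folded xg_def dr_apply]]
  show ?thesis by (simp only: dr_xstar ey_def)
qed

text \<open>The new iterate occurs on both sides of the step equations, so they are used in the form
  \<open>lhs - rhs = 0\<close>; as rewrite rules they would loop.\<close>

lemma y_in_terms_of_x_step:
  "ey (Suc k) = (1/eta) *\<^sub>R (x (Suc k) - x k) + (- alpha) *\<^sub>R (xg k - x (Suc k)) + (dr (xg k) - ystar)"
proof -
  have "x (Suc k) - (x k + (eta * alpha) *\<^sub>R (xg k - x (Suc k)) - eta *\<^sub>R dr (xg k) + eta *\<^sub>R y (Suc k)) = 0"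
    by (rule right_minus_eq[THEN iffD2, OF step_x[of k, folded xg_def dr_apply]])
  moreover have "eta *\<^sub>R ((1/eta) *\<^sub>R (x (Suc k) - x k) + (- alpha) *\<^sub>R (xg k - x (Suc k))
      + (dr (xg k) - ystar) - ey (Suc k))
    = x (Suc k) - (x k + (eta * alpha) *\<^sub>R (xg k - x (Suc k)) - eta *\<^sub>R dr (xg k) + eta *\<^sub>R y (Suc k))"
    using parameters_pos by (simp add: ey_def algebra_simps)
  ultimately show ?thesis using parameters_pos by simp
qed

lemma y_step_in_errors:
  "ey (Suc k) - ey k = (theta*beta) *\<^sub>R (eyg k - ey (Suc k))
     - theta *\<^sub>R ((2/mu) *\<^sub>R (eyg k + ezg k) + nu *\<^sub>R eyg k) + (theta*nu) *\<^sub>R ey (Suc k)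
     - theta *\<^sub>R (x (Suc k) - xstar)"
proof -
  have "(2/mu) *\<^sub>R (yg k + zg k) = (2/mu) *\<^sub>R (eyg k + ezg k) + (2/mu) *\<^sub>R (ystar + zstar)"
    unfolding eyg_def ezg_def by (simp add: algebra_simps)
  then have coupling: "(2/mu) *\<^sub>R (yg k + zg k) = (2/mu) *\<^sub>R (eyg k + ezg k) - xstar"
    unfolding ystar_zstar by simp
  have "y (Suc k) - (y k + (theta * beta) *\<^sub>R (yg k - y (Suc k)) - theta *\<^sub>R ((2 / mu) *\<^sub>R (yg k + zg k)
      + nu *\<^sub>R yg k) + (theta * nu) *\<^sub>R y (Suc k) - theta *\<^sub>R x (Suc k)) = 0"
    by (rule right_minus_eq[THEN iffD2, OF step_y[of k, folded yg_def zg_def]])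
  moreover have "(ey (Suc k) - ey k) - ((theta*beta) *\<^sub>R (eyg k - ey (Suc k))
     - theta *\<^sub>R ((2/mu) *\<^sub>R (eyg k + ezg k) + nu *\<^sub>R eyg k) + (theta*nu) *\<^sub>R ey (Suc k)
     - theta *\<^sub>R (x (Suc k) - xstar))
    = y (Suc k) - (y k + (theta * beta) *\<^sub>R (yg k - y (Suc k)) - theta *\<^sub>R ((2 / mu) *\<^sub>R (yg k + zg k)
      + nu *\<^sub>R yg k) + (theta * nu) *\<^sub>R y (Suc k) - theta *\<^sub>R x (Suc k))"
    unfolding coupling ey_def eyg_def by (simp add: algebra_simps)
  ultimately show ?thesis by simp
qed

lemma z_step_in_preimages:
  "W (pz (Suc k)) - W (pz k) = (lam*gamma) *\<^sub>R (W (pzg k) - W (pz (Suc k)))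
     - lam *\<^sub>R W ((2/mu) *\<^sub>R (eyg k + ezg k))"
proof -
  have "W ((2/mu) *\<^sub>R (yg k + zg k)) = W ((2/mu) *\<^sub>R (eyg k + ezg k) + (2/mu) *\<^sub>R (ystar + zstar))"
    unfolding eyg_def ezg_def by (simp add: algebra_simps)
  then have coupling: "W ((2/mu) *\<^sub>R (yg k + zg k)) = W ((2/mu) *\<^sub>R (eyg k + ezg k))"
    unfolding ystar_zstar using W_lin W_xstar by (simp add: linear_add linear_diff)
  have "z (Suc k) - (z k + (lam * gamma) *\<^sub>R (zg k - z (Suc k)) - lam *\<^sub>R W ((2/mu) *\<^sub>R (yg k + zg k))) = 0"
    by (rule right_minus_eq[THEN iffD2, OF step_z[of k, folded yg_def zg_def]])
  moreover have "(W (pz (Suc k)) - W (pz k)) - ((lam*gamma) *\<^sub>R (W (pzg k) - W (pz (Suc k)))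
     - lam *\<^sub>R W ((2/mu) *\<^sub>R (eyg k + ezg k)))
    = z (Suc k) - (z k + (lam * gamma) *\<^sub>R (zg k - z (Suc k)) - lam *\<^sub>R W ((2/mu) *\<^sub>R (yg k + zg k)))"
    unfolding preimages(2,6) coupling ez_def ezg_def by (simp add: algebra_simps)
  ultimately show ?thesis by simp
qed

lemma averaging_steps:
  "eyg k = sigma *\<^sub>R ey k + (1 - sigma) *\<^sub>R eyf k"
  "ezg k = sigma *\<^sub>R ez k + (1 - sigma) *\<^sub>R ezf k"
  "eyf (Suc k) = eyg k + sigma *\<^sub>R (ey (Suc k) - ey k)"
  "ezf (Suc k) = ezg k + sigma *\<^sub>R (ez (Suc k) - ez k)"
  unfolding ey_def eyf_def eyg_def ez_def ezf_def ezg_def yg_def zg_def step_yf step_zf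
  by (simp_all add: algebra_simps)

lemma h_increment_bound:
  "(2/sigma) * h_quad mu nu (eyf (Suc k) - eyg k) (ezf (Suc k) - ezg k)
   \<le> (1/theta) * (norm (ey (Suc k) - ey k))^2 + (1/lam) * (W (pz (Suc k) - pz k) \<bullet> (pz (Suc k) - pz k))"
proof -
  have d: "eyf (Suc k) - eyg k = sigma *\<^sub>R (ey (Suc k) - ey k)"
    by (simp add: averaging_steps)
  have e: "ezf (Suc k) - ezg k = sigma *\<^sub>R W (pz (Suc k) - pz k)"
    using W_lin by (simp add: averaging_steps linear_diff preimages)
  have "0 \<le> nu" using parameters_pos by simp
  from h_quad_increment_bound[OF parameters_pos(5) mu_pos this parameters_pos(10) lmax_pos
      dual_parameter_bounds(1,2) spectral_norm_bounds(1), of "ey (Suc k) - ey k"]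
  show ?thesis unfolding d e .
qed

lemma h_extrapolation_bound:
  "beta * (norm (eyg k))^2 + gamma * (W (pzg k) \<bullet> pzg k) \<le> 2 * h_quad mu nu (eyg k) (ezg k)"
proof -
  have "0 \<le> beta" using parameters_pos by simp
  from h_quad_lower_bound[OF this dual_parameter_bounds(3,4) mu_pos
      spectral_norm_bounds(2)[OF preimages(5)], of "eyg k"]
  show ?thesis by (simp only: preimages(6) dual_parameter_bounds(5))
qed

lemma y_residual_bound:
  "(sigma / theta + 2 * nu - beta) * (norm (ey (Suc k)))^2
   \<le> 1/(2*eta) * (norm (x (Suc k) - x k))^2 + alpha * (norm (xg k - x (Suc k)))^2
     + 1/(2*L) * (norm (dr (xg k) - ystar))^2"
proof -
  have "3 * (sigma / theta + 2 * nu - beta) * (- alpha)^2 \<le> alpha"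
    using coupling_parameter_bounds(4) by simp
  from norm_sq_le_three_terms[OF y_in_terms_of_x_step coupling_parameter_bounds(1)
      coupling_parameter_bounds(3) this coupling_parameter_bounds(2)]
  show ?thesis .
qed

lemma energy_inequality:
  "(1 + sigma) * distance_energy (Suc k) + (2-tau)/tau * bregman r dr (xf (Suc k)) xstar
     + 2/sigma * h_quad mu nu (eyf (Suc k)) (ezf (Suc k))
   \<le> distance_energy k + 2*(1-tau)/tau * bregman r dr (xf k) xstar
     + 2*(1-sigma)/sigma * h_quad mu nu (eyf k) (ezf k)"
proof -
  note pos = parameters_pos
  note Y = y_block_identity[OF pos(8) y_step_in_errors[of k]]
  note Z = z_block_identity[OF W_lin W_sym pos(10) z_step_in_preimages[of k]]
  note H = h_block_identity[where nu = nu, OF pos(5) mu_pos averaging_steps[of k]]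
  have cross: "(x (Suc k) - xstar) \<bullet> ey (Suc k) = ey (Suc k) \<bullet> (x (Suc k) - xstar)"
    "(2/mu) *\<^sub>R (eyg k + ezg k) \<bullet> W (pz (Suc k)) = (2/mu) *\<^sub>R (eyg k + ezg k) \<bullet> ez (Suc k)"
    by (simp_all only: inner_commute preimages(2))
  have energies: "(1 + sigma) * distance_energy (Suc k) = distance_energy (Suc k)
      + sigma * (1/eta * (norm (x (Suc k) - xstar))^2) + sigma * (1/theta * (norm (ey (Suc k)))^2)
      + sigma * (1/lam * (W (pz (Suc k)) \<bullet> pz (Suc k)))"
    "distance_energy j = 1/eta * (norm (x j - xstar))^2 + 1/theta * (norm (ey j))^2 + 1/lam * (W (pz j) \<bullet> pz j)"
    for j by (simp_all add: distance_energy_def algebra_simps add_divide_distrib)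
  have "0 \<le> 2*(1-sigma)/sigma" using pos rate_parameter_bounds(1) by (intro divide_nonneg_pos) auto
  then have "0 \<le> 2*(1-sigma)/sigma * h_quad mu nu (eyf k - eyg k) (ezf k - ezg k)"
    using h_quad_nonneg[OF mu_pos less_imp_le[OF pos(6)]] by (rule mult_nonneg_nonneg)
  moreover have "0 \<le> gamma * (W (pzg k - pz (Suc k)) \<bullet> (pzg k - pz (Suc k)))"
    using pos W_psd by simp
  moreover have "0 \<le> beta * (norm (eyg k - ey (Suc k)))^2" using pos by simp
  moreover have "sigma / eta \<le> alpha" "sigma / lam \<le> gamma"
    using rate_parameter_bounds(2,3) pos by (simp_all add: divide_le_eq mult.commute)
  then have "sigma * (1/eta * (norm (x (Suc k) - xstar))^2) \<le> alpha * (norm (x (Suc k) - xstar))^2"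
    and "sigma * (1/lam * (W (pz (Suc k)) \<bullet> pz (Suc k))) \<le> gamma * (W (pz (Suc k)) \<bullet> pz (Suc k))"
    using mult_right_mono[of "sigma / eta" alpha] mult_right_mono[of "sigma / lam" gamma] W_psd by simp_all
  moreover have "(sigma / theta + 2 * nu - beta) * (norm (ey (Suc k)))^2
      = sigma * (1/theta * (norm (ey (Suc k)))^2) + 2 * nu * (norm (ey (Suc k)))^2 - beta * (norm (ey (Suc k)))^2"
    by (simp add: algebra_simps)
  ultimately show ?thesis
    using x_step_bound[of k] Y Z H h_increment_bound[of k] h_extrapolation_bound[of k] y_residual_bound[of k]
      cross energies(1) energies(2)[of k] energies(2)[of "Suc k"]
    by linarith
qed

lemma lyapunov_expand:
  "lyapunov k = (1 + sigma) * distance_energy k + (2 - tau)/tau * bregman r dr (xf k) xstar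
     + 2/sigma * h_quad mu nu (eyf k) (ezf k)"
proof -
  have "Wdag_sqnorm W (z k - zstar) = W (pz k) \<bullet> pz k"
    using preimages(2)[of k] unfolding Wdag_sqnorm_def pz_def ez_def by (simp add: inner_commute)
  moreover have "bregman (\<lambda>(u, v). 1 / mu * (norm (u + v))\<^sup>2 + nu / 2 * (norm u)\<^sup>2)
      (\<lambda>(u, v). ((2 / mu) *\<^sub>R (u + v) + nu *\<^sub>R u, (2 / mu) *\<^sub>R (u + v))) (yf k, zf k) (ystar, zstar)
      = h_quad mu nu (eyf k) (ezf k)"
    unfolding eyf_def ezf_def using mu_pos by (intro bregman_h_quad) simp
  ultimately show ?thesis unfolding lyapunov_def distance_energy_def ey_def by simp
qed

lemma lyapunov_contraction: "(1 + sigma) * lyapunov (Suc k) \<le> lyapunov k"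
proof -
  note pos = parameters_pos
  define D H where "D = bregman r dr (xf k) xstar" and "H = h_quad mu nu (eyf k) (ezf k)"
  define R where "R = distance_energy k + 2*(1-tau)/tau * D + 2*(1-sigma)/sigma * H"
  have "0 \<le> alpha/2 * (norm (xf k - xstar))^2" using pos by simp
  then have "0 \<le> D" using r_bregman_bounds(1)[of "xf k" xstar] unfolding D_def by linarith
  moreover have "(1 + sigma) * (2*(1-tau)/tau) \<le> (2 - tau)/tau"
  proof -
    have "(1 + sigma) * (2*(1-tau)) = 2 - 2 * tau + 2 * sigma - 2 * (sigma * tau)" by (simp add: algebra_simps)
    also have "\<dots> \<le> 2 - tau"
      using rate_parameter_bounds(1) mult_nonneg_nonneg[of sigma tau] pos by linarith
    finally show ?thesis using pos by (simp add: divide_right_mono)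
  qed
  ultimately have "((1 + sigma) * (2*(1-tau)/tau)) * D \<le> (2 - tau)/tau * D"
    by (rule mult_right_mono[rotated])
  moreover have "0 \<le> H" unfolding H_def using h_quad_nonneg[OF mu_pos less_imp_le[OF pos(6)]] .
  then have "((1 + sigma) * (2*(1-sigma)/sigma)) * H \<le> 2/sigma * H"
    using pos by (intro mult_right_mono) (simp_all add: field_simps)
  ultimately have "(1 + sigma) * R \<le> lyapunov k"
    unfolding R_def lyapunov_expand D_def[symmetric] H_def[symmetric] by (simp add: algebra_simps)
  moreover have "lyapunov (Suc k) \<le> R"
    using energy_inequality[of k] unfolding lyapunov_expand R_def D_def H_def by linarith
  then have "(1 + sigma) * lyapunov (Suc k) \<le> (1 + sigma) * R" using pos by simp
  ultimately show ?thesis by linarith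
qed

lemma lyapunov_rate: "lyapunov (Suc k) \<le> (1 - 1 / (1 + 1 / sigma)) * lyapunov k"
proof -
  have "1 - 1 / (1 + 1 / sigma) = 1 / (1 + sigma)" using parameters_pos(5) by (simp add: field_simps)
  then show ?thesis using lyapunov_contraction[of k] parameters_pos(5) by (simp add: field_simps)
qed

end

theorem mainTheorem4:
  fixes F :: "real^'d^'n \<Rightarrow> real"
    and gradF :: "real^'d^'n \<Rightarrow> real^'d^'n"
    and W :: "real^'d^'n \<Rightarrow> real^'d^'n"
    and mu L :: real
    and xstar :: "real^'d^'n"
    and x y z xf yf zf :: "nat \<Rightarrow> real^'d^'n"
    and tau alpha eta sigma nu beta theta gamma lam rho :: real
    and Psi :: "nat \<Rightarrow> real"
  assumes n2: "CARD('n) \<ge> 2"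
    and F_grad: "\<And>u. (F has_derivative (\<lambda>h. gradF u \<bullet> h)) (at u)"
    and mu_pos: "0 < mu" and mu_le_L: "mu \<le> L"
    and F_sc: "strongly_convex mu F"
    and F_smooth: "lipschitz_gradient L gradF"
    and W_lin: "linear W"
    and W_sym: "\<And>u v. W u \<bullet> v = u \<bullet> W v"
    and W_psd: "\<And>u. 0 \<le> W u \<bullet> u"
    and W_ker: "{u. W u = 0} = consensus"
    and xstar_cons: "xstar \<in> consensus"
    and xstar_min: "\<And>u. u \<in> consensus \<Longrightarrow> F xstar \<le> F u"
    and tau_def: "tau = 1/2 * sqrt (mu / L)"
    and alpha_def: "alpha = mu / 2"
    and eta_def: "eta = 1 / (2 * sqrt (mu * L))"
    and sigma_def: "sigma = 1/18 * sqrt (mu * lambda_min_pos W / (L * lambda_max W))"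
    and nu_def: "nu = 3 / (80 * L)"
    and beta_def: "beta = 1 / (80 * L)"
    and theta_def: "theta = 18 * sqrt (mu * L * lambda_max W) / (5 * sqrt (lambda_min_pos W))"
    and gamma_def: "gamma = lambda_min_pos W / (80 * L)"
    and lam_def: "lam = 9 * sqrt (mu * L) / (2 * sqrt (lambda_min_pos W * lambda_max W))"
    and z0: "z 0 \<in> range W"
    and xf0: "xf 0 = x 0" and yf0: "yf 0 = y 0" and zf0: "zf 0 = z 0"
    and step_x: "\<And>k. x (Suc k) = x k
        + (eta * alpha) *\<^sub>R ((tau *\<^sub>R x k + (1 - tau) *\<^sub>R xf k) - x (Suc k))
        - eta *\<^sub>R (gradF (tau *\<^sub>R x k + (1 - tau) *\<^sub>R xf k)
                     - (mu / 2) *\<^sub>R (tau *\<^sub>R x k + (1 - tau) *\<^sub>R xf k))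
        + eta *\<^sub>R y (Suc k)"
    and step_y: "\<And>k. y (Suc k) = y k
        + (theta * beta) *\<^sub>R ((sigma *\<^sub>R y k + (1 - sigma) *\<^sub>R yf k) - y (Suc k))
        - theta *\<^sub>R ((2 / mu) *\<^sub>R ((sigma *\<^sub>R y k + (1 - sigma) *\<^sub>R yf k)
                                   + (sigma *\<^sub>R z k + (1 - sigma) *\<^sub>R zf k))
                      + nu *\<^sub>R (sigma *\<^sub>R y k + (1 - sigma) *\<^sub>R yf k))
        + (theta * nu) *\<^sub>R y (Suc k)
        - theta *\<^sub>R x (Suc k)"
    and step_z: "\<And>k. z (Suc k) = z k
        + (lam * gamma) *\<^sub>R ((sigma *\<^sub>R z k + (1 - sigma) *\<^sub>R zf k) - z (Suc k))
        - lam *\<^sub>R W ((2 / mu) *\<^sub>R ((sigma *\<^sub>R y k + (1 - sigma) *\<^sub>R yf k)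
                                    + (sigma *\<^sub>R z k + (1 - sigma) *\<^sub>R zf k)))"
    and step_xf: "\<And>k. xf (Suc k) = (tau *\<^sub>R x k + (1 - tau) *\<^sub>R xf k)
        + (2 * tau / (2 - tau)) *\<^sub>R (x (Suc k) - x k)"
    and step_yf: "\<And>k. yf (Suc k) = (sigma *\<^sub>R y k + (1 - sigma) *\<^sub>R yf k)
        + sigma *\<^sub>R (y (Suc k) - y k)"
    and step_zf: "\<And>k. zf (Suc k) = (sigma *\<^sub>R z k + (1 - sigma) *\<^sub>R zf k)
        + sigma *\<^sub>R (z (Suc k) - z k)"
    and rho_def: "rho = 1/18 * sqrt (mu * lambda_min_pos W / (L * lambda_max W))"
    and Psi_def: "Psi = (\<lambda>k.
        (1 + rho) * (1 / eta * (norm (x k - xstar))\<^sup>2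
                     + 1 / theta * (norm (y k - (gradF xstar - (mu / 2) *\<^sub>R xstar)))\<^sup>2
                     + 1 / lam * Wdag_sqnorm W (z k - (- gradF xstar)))
        + (2 - tau) / tau *
            bregman (\<lambda>u. F u - mu / 4 * (norm u)\<^sup>2) (\<lambda>u. gradF u - (mu / 2) *\<^sub>R u) (xf k) xstar
        + 2 / sigma *
            bregman (\<lambda>(u, v). 1 / mu * (norm (u + v))\<^sup>2 + nu / 2 * (norm u)\<^sup>2)
                    (\<lambda>(u, v). ((2 / mu) *\<^sub>R (u + v) + nu *\<^sub>R u, (2 / mu) *\<^sub>R (u + v)))
                    (yf k, zf k)
                    (gradF xstar - (mu / 2) *\<^sub>R xstar, - gradF xstar))"
  shows "\<forall>k. Psi (Suc k) \<le> (1 - 1 / (1 + 1 / rho)) * Psi k"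
proof -
  have zf0_range: "zf 0 \<in> range W" using z0 zf0 by simp
  interpret algorithm3 F gradF W mu L xstar x y z xf yf zf tau alpha eta sigma nu beta theta gamma lam
    by (intro algorithm3.intro) (fact assms zf0_range)+
  have "rho = sigma" using rho_def sigma_def by simp
  then have "Psi k = lyapunov k" for k
    unfolding Psi_def lyapunov_def r_def dr_def ystar_def zstar_def by simp
  with \<open>rho = sigma\<close> show ?thesis using lyapunov_rate by simp
qed
end
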